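(* The number of distinct central characters $\phi_{1,s}:Z(H_1)\to\mathbb C$ ($s\in T$) which admit one-dimensional representations (i.e. such that $H_{1,s}$ has a one-dimensional representation) equals the cardinality of the center of $G$.
   Context: Let $R$ be an irreducible root system of rank $n$ with positive roots $R^+$, Weyl group $W_0$, weight lattice $X$; $W=W_0\ltimes X$ is the extended affine Weyl group with length function $l$ (for $w\in W_0,x\in X$: $l(wx)=\sum_{\alpha\in R^+,w(\alpha)\in R^-}|\langle x,\alpha^\vee\rangle+1|+\sum_{\alpha\in R^+,w(\alpha)\in R^+}|\langle x,\alpha^\vee\rangle|$), $S$ the set of length-one elements of $W_0\ltimes\mathbb ZR$. $H_q$ ($q\in\mathbb C^*$) is the $\mathbb C$-algebra with basis $T_w$ ($w\in W$), relations $(T_r-q)(T_r+1)=0$ ($r\in S$), $T_wT_u=T_{wu}$ if $l(wu)=l(w)+l(u)$; $H_1=\mathbb C[W]$. Let $X^+=\{x\in X: l(wx)=l(w)+l(x)\ \forall w\in W_0\}$. Fix a square root $q^{1/2}$. For $x\in X$ write $x=yz^{-1}$ with $y,z\in X^+$ and set $\theta_x=q^{(l(z)-l(y))/2}T_yT_z^{-1}$ (independent of the choice). For $x\in X^+$ let $S_x=\sum_{y\in W_0\cdot x}\theta_y$; these span the center $Z(H_q)$. Let $G$ be a simply connected simple complex algebraic group with root system $R$, maximal torus $T$, so $X=\mathrm{Hom}(T,\mathbb C^* )$ and $W_0=N_G(T)/T$. For $s\in T$, $\phi_{q,s}:Z(H_q)\to\mathbb C$ is the restriction of the algebra map $\theta_x\mapsto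 x(s)$ on the span of the $\theta_x$; $I_{q,s}$ is the two-sided ideal generated by $S_x-\phi_{q,s}(S_x)$, $x\in X^+$, and $H_{q,s}=H_q/I_{q,s}$. *)

theory Defs
  imports Complex_Main
begin

text \<open>
The root system R of rank n is given by its Cartan matrix
C :: 'i \<Rightarrow> 'i \<Rightarrow> int, indexed by a finite type 'i of n simple roots,
with the convention  C i j = <alpha_j, alpha_i^vee>.
Since G is simply connected, X is the weight lattice; we use coordinates
with respect to the fundamental weights: x :: 'i \<Rightarrow> int with x i = <x, alpha_i^vee>.
Coroots are written in coordinates w.r.t. the simple coroots.
\<close>

type_synonym 'i wt = "'i \<Rightarrow> int"

(* elements of W_0: pair (action on X, action on the coroot lattice) *)
type_synonym 'i weyl = "('i wt \<Rightarrow> 'i wt) \<times> ('i wt \<Rightarrow> 'i wt)"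

(* elements w x (= w t_x) of the extended affine Weyl group W = W_0 \<ltimes> X *)
type_synonym 'i affw = "'i weyl \<times> 'i wt"

definition zero_wt :: "'i wt" where "zero_wt = (\<lambda>i. 0)"

definition add_wt :: "'i wt \<Rightarrow> 'i wt \<Rightarrow> 'i wt" where
  "add_wt x y = (\<lambda>i. x i + y i)"

definition simple_root :: "('i \<Rightarrow> 'i \<Rightarrow> int) \<Rightarrow> 'i \<Rightarrow> 'i wt" where
  "simple_root C j = (\<lambda>i. C i j)"

definition simple_coroot :: "'i \<Rightarrow> 'i wt" where
  "simple_coroot j = (\<lambda>i. if i = j then 1 else 0)"

definition pairing :: "'i::finite wt \<Rightarrow> 'i wt \<Rightarrow> int" where
  "pairing x a = (\<Sum>i\<in>UNIV. a i * x i)"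

(* simple reflection s_j on X: x - <x,alpha_j^vee> alpha_j *)
definition sref :: "('i \<Rightarrow> 'i \<Rightarrow> int) \<Rightarrow> 'i \<Rightarrow> 'i wt \<Rightarrow> 'i wt" where
  "sref C j x = (\<lambda>i. x i - x j * C i j)"

(* simple reflection s_j on coroots: b - <alpha_j, b> alpha_j^vee *)
definition scoref :: "('i::finite \<Rightarrow> 'i \<Rightarrow> int) \<Rightarrow> 'i \<Rightarrow> 'i wt \<Rightarrow> 'i wt" where
  "scoref C j e = (\<lambda>i. e i - (if i = j then (\<Sum>k\<in>UNIV. e k * C k j) else 0))"

definition weyl_one :: "'i weyl" where "weyl_one = (id, id)"

inductive_set weyl0 :: "('i::finite \<Rightarrow> 'i \<Rightarrow> int) \<Rightarrow> 'i weyl set" for C where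
  one: "weyl_one \<in> weyl0 C"
| step: "w \<in> weyl0 C \<Longrightarrow> (sref C j \<circ> fst w, scoref C j \<circ> snd w) \<in> weyl0 C"

definition roots :: "('i::finite \<Rightarrow> 'i \<Rightarrow> int) \<Rightarrow> 'i wt set" where
  "roots C = {fst w (simple_root C j) | w j. w \<in> weyl0 C}"

definition roots_coroots :: "('i::finite \<Rightarrow> 'i \<Rightarrow> int) \<Rightarrow> ('i wt \<times> 'i wt) set" where
  "roots_coroots C =
     {(fst w (simple_root C j), snd w (simple_coroot j)) | w j. w \<in> weyl0 C}"

definition posroot :: "('i::finite \<Rightarrow> 'i \<Rightarrow> int) \<Rightarrow> 'i wt \<Rightarrow> bool" where
  "posroot C a \<longleftrightarrow> a \<in> roots C \<and>
     (\<exists>c::'i \<Rightarrow> int. (\<forall>j. 0 \<le> c j) \<and> a = (\<lambda>i. \<Sum>j\<in>UNIV. C i j * c j))"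

definition negroot :: "('i::finite \<Rightarrow> 'i \<Rightarrow> int) \<Rightarrow> 'i wt \<Rightarrow> bool" where
  "negroot C a \<longleftrightarrow> posroot C (\<lambda>i. - a i)"

definition len :: "('i::finite \<Rightarrow> 'i \<Rightarrow> int) \<Rightarrow> 'i affw \<Rightarrow> int" where
  "len C g =
     (\<Sum>p\<in>{p \<in> roots_coroots C. posroot C (fst p) \<and> negroot C (fst (fst g) (fst p))}.
          \<bar>pairing (snd g) (snd p) + 1\<bar>)
   + (\<Sum>p\<in>{p \<in> roots_coroots C. posroot C (fst p) \<and> posroot C (fst (fst g) (fst p))}.
          \<bar>pairing (snd g) (snd p)\<bar>)"

definition Xplus :: "('i::finite \<Rightarrow> 'i \<Rightarrow> int) \<Rightarrow> 'i wt set" where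
  "Xplus C = {x. \<forall>w\<in>weyl0 C. len C (w, x) = len C (w, zero_wt) + len C (weyl_one, x)}"

definition Wset :: "('i::finite \<Rightarrow> 'i \<Rightarrow> int) \<Rightarrow> 'i affw set" where
  "Wset C = weyl0 C \<times> UNIV"

(* (w t_x)(w' t_x') = w w' t_{w'^{-1} x + x'} *)
definition wmul :: "'i affw \<Rightarrow> 'i affw \<Rightarrow> 'i affw" where
  "wmul g h = ((fst (fst g) \<circ> fst (fst h), snd (fst g) \<circ> snd (fst h)),
               add_wt (inv (fst (fst h)) (snd g)) (snd h))"

definition wone :: "'i affw" where "wone = (weyl_one, zero_wt)"

(* H_1 = C[W]: finitely supported complex functions on W; T_w = delta w *)
definition H1 :: "('i::finite \<Rightarrow> 'i \<Rightarrow> int) \<Rightarrow> ('i affw \<Rightarrow> complex) set" where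
  "H1 C = {a. finite {g. a g \<noteq> 0} \<and> {g. a g \<noteq> 0} \<subseteq> Wset C}"

definition conv :: "('i affw \<Rightarrow> complex) \<Rightarrow> ('i affw \<Rightarrow> complex) \<Rightarrow> 'i affw \<Rightarrow> complex" where
  "conv a b = (\<lambda>g. \<Sum>p\<in>{p \<in> {h. a h \<noteq> 0} \<times> {k. b k \<noteq> 0}. wmul (fst p) (snd p) = g}.
                    a (fst p) * b (snd p))"

definition Tw :: "'i affw \<Rightarrow> 'i affw \<Rightarrow> complex" where
  "Tw w = (\<lambda>g. if g = w then 1 else 0)"

(* at q = 1, theta_x = T_y T_z^{-1} = T_{t_x} *)
definition theta1 :: "'i wt \<Rightarrow> 'i affw \<Rightarrow> complex" where
  "theta1 x = Tw (weyl_one, x)"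

definition orbit :: "('i::finite \<Rightarrow> 'i \<Rightarrow> int) \<Rightarrow> 'i wt \<Rightarrow> 'i wt set" where
  "orbit C x = {fst w x | w. w \<in> weyl0 C}"

definition Sx :: "('i::finite \<Rightarrow> 'i \<Rightarrow> int) \<Rightarrow> 'i wt \<Rightarrow> 'i affw \<Rightarrow> complex" where
  "Sx C x = (\<lambda>g. \<Sum>y\<in>orbit C x. theta1 y g)"

(* T = Hom(X, C^x), the group homomorphisms X to nonzero complexes *)
definition torus :: "('i wt \<Rightarrow> complex) set" where
  "torus = {s. s zero_wt = 1 \<and> (\<forall>x y. s (add_wt x y) = s x * s y)}"

(* phi_{1,s}(S_x) = sum_{y in W_0 x} y(s) *)
definition phi :: "('i::finite \<Rightarrow> 'i \<Rightarrow> int) \<Rightarrow> ('i wt \<Rightarrow> complex) \<Rightarrow> 'i wt \<Rightarrow> complex" where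
  "phi C s x = (\<Sum>y\<in>orbit C x. s y)"

(* the central character phi_{1,s} on Z(H_1), recorded by its values on the spanning set S_x, x in X^+ *)
definition central_char ::
  "('i::finite \<Rightarrow> 'i \<Rightarrow> int) \<Rightarrow> ('i wt \<Rightarrow> complex) \<Rightarrow> 'i wt \<Rightarrow> complex" where
  "central_char C s = (\<lambda>x. if x \<in> Xplus C then phi C s x else 0)"

inductive_set Iideal :: "('i::finite \<Rightarrow> 'i \<Rightarrow> int) \<Rightarrow> ('i wt \<Rightarrow> complex)
                         \<Rightarrow> ('i affw \<Rightarrow> complex) set" for C s where
  gen: "x \<in> Xplus C \<Longrightarrow> (\<lambda>g. Sx C x g - phi C s x * Tw wone g) \<in> Iideal C s"
| zero: "(\<lambda>g. 0) \<in> Iideal C s"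
| add: "a \<in> Iideal C s \<Longrightarrow> b \<in> Iideal C s \<Longrightarrow> (\<lambda>g. a g + b g) \<in> Iideal C s"
| lmul: "a \<in> H1 C \<Longrightarrow> b \<in> Iideal C s \<Longrightarrow> conv a b \<in> Iideal C s"
| rmul: "a \<in> H1 C \<Longrightarrow> b \<in> Iideal C s \<Longrightarrow> conv b a \<in> Iideal C s"

(* a one-dimensional representation of H_{1,s} = H_1 / I_{1,s}, i.e. a unital
   algebra homomorphism H_1 \<rightarrow> C vanishing on I_{1,s} *)
definition one_dim_rep :: "('i::finite \<Rightarrow> 'i \<Rightarrow> int) \<Rightarrow> ('i wt \<Rightarrow> complex)
                           \<Rightarrow> (('i affw \<Rightarrow> complex) \<Rightarrow> complex) \<Rightarrow> bool" where
  "one_dim_rep C s f \<longleftrightarrow>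
     (\<forall>a\<in>H1 C. \<forall>b\<in>H1 C. f (\<lambda>g. a g + b g) = f a + f b \<and> f (conv a b) = f a * f b)
   \<and> (\<forall>c. \<forall>a\<in>H1 C. f (\<lambda>g. c * a g) = c * f a)
   \<and> f (Tw wone) = 1
   \<and> (\<forall>a\<in>Iideal C s. f a = 0)"

(* centre of G = intersection of the kernels of the roots in T *)
definition centerG :: "('i::finite \<Rightarrow> 'i \<Rightarrow> int) \<Rightarrow> ('i wt \<Rightarrow> complex) set" where
  "centerG C = {s \<in> torus. \<forall>a\<in>roots C. s a = 1}"

definition irred_cartan :: "('i::finite \<Rightarrow> 'i \<Rightarrow> int) \<Rightarrow> bool" where
  "irred_cartan C \<longleftrightarrow>
     (\<forall>i. C i i = 2) \<and> (\<forall>i j. i \<noteq> j \<longrightarrow> C i j \<le> 0)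
   \<and> (\<forall>i j. C i j = 0 \<longleftrightarrow> C j i = 0)
   \<and> (\<exists>d::'i \<Rightarrow> real. (\<forall>i. 0 < d i) \<and> (\<forall>i j. d i * of_int (C i j) = d j * of_int (C j i))
        \<and> (\<forall>v::'i \<Rightarrow> real. v \<noteq> (\<lambda>i. 0) \<longrightarrow>
              0 < (\<Sum>i\<in>UNIV. \<Sum>j\<in>UNIV. v i * d i * of_int (C i j) * v j)))
   \<and> (\<forall>J::'i set. J \<noteq> {} \<and> J \<noteq> UNIV \<longrightarrow> (\<exists>i\<in>J. \<exists>j. j \<notin> J \<and> C i j \<noteq> 0))"

end

theory Submission
  imports Defs
begin

(*
  A one-dimensional representation f of H_1 = C[W] restricts on the lattice part
  to a character s'(x) = f(T_{t_x}) of X, i.e. a point of the torus T; since the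
  elements of W_0 act invertibly, s' is W_0-invariant, hence kills every root, hence lies
  in the centre Z(G).  Evaluating f on S_x shows that the central character phi_{1,s}
  coincides with phi_{1,s'}.  Conversely every s in Z(G) is W_0-invariant, so
  sum a_g T_g \<mapsto> sum a_g s(x_g) is an algebra homomorphism vanishing on I_{1,s}.
  Hence the central characters in question are exactly phi_{1,s} for s in Z(G), and the
  map s \<mapsto> phi_{1,s} is injective on Z(G) because each fundamental weight lies in X^+.
*)

(* A root is recorded by its coefficient vector c with respect to the simple roots
   (simple_coroot j doubles as the j-th unit vector); root_wt C c is the corresponding
   weight in fundamental-weight coordinates, i.e. i \<mapsto> <sum_j c_j alpha_j, alpha_i^vee>. *)
definition root_wt :: "('i::finite \<Rightarrow> 'i \<Rightarrow> int) \<Rightarrow> ('i \<Rightarrow> int) \<Rightarrow> 'i \<Rightarrow> int" where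
  "root_wt C c = (\<lambda>i. \<Sum>j\<in>UNIV. C i j * c j)"

(* The simple reflection s_j in simple-root coordinates: c - <c, alpha_j^vee> e_j. *)
definition refl_coeffs :: "('i::finite \<Rightarrow> 'i \<Rightarrow> int) \<Rightarrow> 'i \<Rightarrow> ('i \<Rightarrow> int) \<Rightarrow> 'i \<Rightarrow> int" where
  "refl_coeffs C j c = (\<lambda>k. c k - (\<Sum>l\<in>UNIV. C j l * c l) * simple_coroot j k)"

definition real_vec :: "('i \<Rightarrow> int) \<Rightarrow> 'i \<Rightarrow> real" where
  "real_vec c = (\<lambda>i. of_int (c i))"

inductive_set root_coeffs :: "('i::finite \<Rightarrow> 'i \<Rightarrow> int) \<Rightarrow> ('i \<Rightarrow> int) set" for C where
  base: "simple_coroot j \<in> root_coeffs C"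
| rstep: "c \<in> root_coeffs C \<Longrightarrow> refl_coeffs C j c \<in> root_coeffs C"

(* A Cartan matrix symmetrized by d: D C is symmetric positive definite.  This is all
   of irred_cartan that the argument uses. *)
locale cartan =
  fixes C :: "'i::finite \<Rightarrow> 'i \<Rightarrow> int" and d :: "'i \<Rightarrow> real"
  assumes diag: "C i i = 2"
    and offdiag: "i \<noteq> j \<Longrightarrow> C i j \<le> 0"
    and dpos: "0 < d i"
    and dsym: "d i * of_int (C i j) = d j * of_int (C j i)"
    and posdef: "v \<noteq> (\<lambda>i. 0) \<Longrightarrow> 0 < (\<Sum>i\<in>UNIV. \<Sum>j\<in>UNIV. v i * d i * of_int (C i j) * v j)"
begin

definition B :: "('i \<Rightarrow> real) \<Rightarrow> ('i \<Rightarrow> real) \<Rightarrow> real" where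
  "B x y = (\<Sum>i\<in>UNIV. \<Sum>j\<in>UNIV. x i * d i * of_int (C i j) * y j)"

definition cpair :: "'i \<Rightarrow> ('i \<Rightarrow> real) \<Rightarrow> real" where
  "cpair j x = (\<Sum>l\<in>UNIV. of_int (C j l) * x l)"

definition evec :: "'i \<Rightarrow> 'i \<Rightarrow> real" where "evec j = real_vec (simple_coroot j)"

definition refl_real :: "'i \<Rightarrow> ('i \<Rightarrow> real) \<Rightarrow> 'i \<Rightarrow> real" where
  "refl_real j x = (\<lambda>k. x k - cpair j x * evec j k)"

lemma B_sym: "B x y = B y x"
proof -
  have "B x y = (\<Sum>i\<in>UNIV. \<Sum>j\<in>UNIV. y j * d j * of_int (C j i) * x i)"
    unfolding B_def
    by (rule sum.cong[OF refl], rule sum.cong[OF refl]) (metis dsym mult.commute mult.left_commute)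
  also have "\<dots> = B y x" unfolding B_def by (rule sum.swap)
  finally show ?thesis .
qed

lemma B_evec_right: "B x (evec j) = d j * cpair j x"
proof -
  have "B x (evec j) = (\<Sum>i\<in>UNIV. x i * d i * of_int (C i j))"
    unfolding B_def evec_def real_vec_def simple_coroot_def
    by (simp add: if_distrib cong: if_cong)
  also have "\<dots> = (\<Sum>i\<in>UNIV. d j * (of_int (C j i) * x i))"
    by (rule sum.cong[OF refl]) (metis dsym mult.commute mult.left_commute)
  also have "\<dots> = d j * cpair j x" unfolding cpair_def by (simp add: sum_distrib_left)
  finally show ?thesis .
qed

lemma B_evec_left: "B (evec j) x = d j * cpair j x"
  using B_evec_right B_sym by metis

lemma cpair_evec_self: "cpair j (evec j) = 2"
  unfolding cpair_def evec_def real_vec_def simple_coroot_def by (simp add: if_distrib diag cong: if_cong)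

lemma B_diff_left: "B (\<lambda>i. x i - s * z i) y = B x y - s * B z y"
  unfolding B_def by (simp add: sum_distrib_left sum_subtractf algebra_simps)

lemma B_diff_right: "B y (\<lambda>i. x i - s * z i) = B y x - s * B y z"
  unfolding B_def by (simp add: sum_distrib_left sum_subtractf algebra_simps)

lemma cpair_diff: "cpair j (\<lambda>i. x i - s * z i) = cpair j x - s * cpair j z"
  unfolding cpair_def by (simp add: sum_distrib_left sum_subtractf algebra_simps)

lemma cpair_refl_real: "cpair j (refl_real j x) = - cpair j x"
  by (simp add: refl_real_def cpair_diff cpair_evec_self)

lemma B_refl_real_left: "B (refl_real j x) y = B x y - cpair j x * d j * cpair j y"
  by (simp add: refl_real_def B_diff_left B_evec_left)

lemma B_refl_real: "B (refl_real j x) (refl_real j y) = B x y"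
  by (subst (2) refl_real_def) (simp add: B_diff_right B_refl_real_left B_evec_right cpair_refl_real)

lemma refl_real_involutive: "refl_real j (refl_real j x) = x"
  using cpair_refl_real[of j x] by (simp add: refl_real_def[of j "refl_real j x"]) (simp add: refl_real_def)

lemma B_sub_left: "B (\<lambda>i. x i - z i) y = B x y - B z y"
  using B_diff_left[of x 1 z y] by simp

lemma B_sub_right: "B y (\<lambda>i. x i - z i) = B y x - B y z"
  using B_diff_right[of y x 1 z] by simp

lemma B_pos_def: "v \<noteq> (\<lambda>i. 0) \<Longrightarrow> 0 < B v v"
  unfolding B_def by (rule posdef)

lemma B_smult_left: "B (\<lambda>i. t * y i) z = t * B y z"
  unfolding B_def by (simp add: sum_distrib_left algebra_simps)

lemma B_evec_right_sum: "B x (evec j) = (\<Sum>i\<in>UNIV. x i * d i * of_int (C i j))"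
proof -
  have "B x (evec j) = (\<Sum>i\<in>UNIV. \<Sum>l\<in>UNIV. if l = j then x i * d i * of_int (C i j) else 0)"
    unfolding B_def evec_def real_vec_def simple_coroot_def
    by (rule sum.cong[OF refl], rule sum.cong[OF refl]) auto
  then show ?thesis by (simp add: sum.delta)
qed

lemma B_expand_right: "B x y = (\<Sum>j\<in>UNIV. y j * B x (evec j))"
proof -
  have "B x y = (\<Sum>j\<in>UNIV. \<Sum>i\<in>UNIV. y j * (x i * d i * of_int (C i j)))"
    unfolding B_def by (subst sum.swap) (simp add: algebra_simps)
  then show ?thesis by (simp add: B_evec_right_sum sum_distrib_left)
qed

lemma cpair_evec: "cpair j (evec k) = of_int (C j k)"
proof -
  have "cpair j (evec k) = (\<Sum>l\<in>UNIV. if l = k then of_int (C j k) else 0)"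
    unfolding cpair_def evec_def real_vec_def simple_coroot_def by (rule sum.cong[OF refl]) auto
  then show ?thesis by (simp add: sum.delta)
qed

lemma cauchy_schwarz_strict:
  assumes np: "\<forall>t. x \<noteq> (\<lambda>i. t * y i)" and yp: "0 < B y y"
  shows "(B x y)^2 < B x x * B y y"
proof -
  define t where "t = B x y / B y y"
  have "(\<lambda>i. x i - t * y i) \<noteq> (\<lambda>i. 0)"
  proof
    assume "(\<lambda>i. x i - t * y i) = (\<lambda>i. 0)"
    then have "x = (\<lambda>i. t * y i)" by (metis (mono_tags) eq_iff_diff_eq_0)
    with np show False by blast
  qed
  then have "0 < B (\<lambda>i. x i - t * y i) (\<lambda>i. x i - t * y i)" by (rule B_pos_def)
  also have "\<dots> = B x x - t * B x y - t * (B y x - t * B y y)"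
    by (simp add: B_diff_left B_diff_right)
  also have "\<dots> = B x x - (B x y)^2 / B y y"
    using yp by (simp add: t_def B_sym[of y x] power2_eq_square field_simps)
  finally have "(B x y)^2 / B y y < B x x" by simp
  then show ?thesis using yp by (simp add: divide_less_eq mult.commute)
qed

lemma cauchy_schwarz:
  assumes yp: "0 < B y y"
  shows "(B x y)^2 \<le> B x x * B y y"
proof (cases "\<exists>t. x = (\<lambda>i. t * y i)")
  case True
  then obtain t where x: "x = (\<lambda>i. t * y i)" by blast
  have "B x y = t * B y y" "B x x = t * t * B y y"
    unfolding x by (simp_all add: B_smult_left B_sym[of y "\<lambda>i. t * y i"])
  then show ?thesis by (simp add: power2_eq_square)
next
  case False then show ?thesis using cauchy_schwarz_strict[OF _ yp] by (simp add: less_imp_le)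
qed

end

lemma sum_times_simple_coroot: "(\<Sum>l\<in>UNIV. (f::'i::finite \<Rightarrow> int) l * simple_coroot j l) = f j"
proof -
  have "(\<Sum>l\<in>UNIV. f l * simple_coroot j l) = (\<Sum>l\<in>UNIV. if l = j then f l else 0)"
    by (rule sum.cong) (auto simp: simple_coroot_def)
  then show ?thesis by (simp add: sum.delta)
qed

lemma sum_times_scaled_simple_coroot: "(\<Sum>l\<in>UNIV. (f::'i::finite \<Rightarrow> int) l * (t * simple_coroot j l)) = (f j * t :: int)"
  using sum_times_simple_coroot[of "\<lambda>l. f l * t" j] by (simp add: algebra_simps)

lemma refl_coeffs_involutive: "refl_coeffs C j (refl_coeffs C j c) = c" if "C j j = 2"
proof -
  have s: "(\<Sum>l\<in>UNIV. C j l * refl_coeffs C j c l) = - (\<Sum>l\<in>UNIV. C j l * c l)"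
    unfolding refl_coeffs_def by (simp add: right_diff_distrib sum_subtractf sum_times_scaled_simple_coroot that)
  show ?thesis unfolding refl_coeffs_def[of C j "refl_coeffs C j c"] s by (rule ext) (simp add: refl_coeffs_def algebra_simps)
qed

lemma refl_coeffs_diff: "refl_coeffs C j (\<lambda>k. x k - m * y k) = (\<lambda>k. refl_coeffs C j x k - m * refl_coeffs C j y k)"
  unfolding refl_coeffs_def by (rule ext) (simp add: algebra_simps sum_subtractf sum_distrib_left)

lemma refl_coeffs_neg: "refl_coeffs C j (\<lambda>k. - x k) = (\<lambda>k. - refl_coeffs C j x k)"
  unfolding refl_coeffs_def by (rule ext) (simp add: algebra_simps sum_negf)

context cartan begin

lemma real_vec_refl_coeffs: "real_vec (refl_coeffs C j c) = refl_real j (real_vec c)"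
  unfolding real_vec_def refl_coeffs_def refl_real_def cpair_def evec_def by (rule ext) simp

lemma cpair_real_vec: "cpair j (real_vec c) = of_int (\<Sum>l\<in>UNIV. C j l * c l)"
  unfolding cpair_def real_vec_def by simp

lemma B_refl_real_adjoint: "B x (refl_real j y) = B (refl_real j x) y"
  by (metis B_refl_real refl_real_involutive)

(* Squared length (c,c), Cartan integer 2(g,c)/(c,c) = <g, c^vee>, and the coordinates
   2 d_k c_k/(c,c) of the coroot c^vee in the basis of simple coroots. *)
definition sqnorm :: "('i \<Rightarrow> int) \<Rightarrow> real" where "sqnorm c = B (real_vec c) (real_vec c)"
definition cartan_int :: "('i \<Rightarrow> int) \<Rightarrow> ('i \<Rightarrow> int) \<Rightarrow> real" where
  "cartan_int c g = 2 * B (real_vec g) (real_vec c) / sqnorm c"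
definition coroot_vec :: "('i \<Rightarrow> int) \<Rightarrow> 'i \<Rightarrow> real" where
  "coroot_vec c k = 2 * d k * of_int (c k) / sqnorm c"

lemma B_evec_self: "B (evec j) (evec j) = 2 * d j"
  by (simp add: B_evec_left cpair_evec_self)

lemma real_vec_simple_coroot: "real_vec (simple_coroot j) = evec j" by (simp add: evec_def)

lemma sqnorm_root_coeffs: "c \<in> root_coeffs C \<Longrightarrow> \<exists>j. sqnorm c = 2 * d j"
proof (induction rule: root_coeffs.induct)
  case (base j) then show ?case by (auto simp: sqnorm_def real_vec_simple_coroot B_evec_self)
next
  case (rstep c j) then show ?case by (simp add: sqnorm_def real_vec_refl_coeffs B_refl_real)
qed

lemma sqnorm_pos: "c \<in> root_coeffs C \<Longrightarrow> 0 < sqnorm c"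
  using sqnorm_root_coeffs dpos by (metis mult_pos_pos zero_less_numeral)

lemma sqnorm_refl_coeffs: "sqnorm (refl_coeffs C j c) = sqnorm c"
  by (simp add: sqnorm_def real_vec_refl_coeffs B_refl_real)

lemma cartan_int_refl_coeffs: "cartan_int (refl_coeffs C i c) g = cartan_int c (refl_coeffs C i g)"
  unfolding cartan_int_def sqnorm_refl_coeffs by (simp add: real_vec_refl_coeffs B_refl_real_adjoint)

lemma cartan_int_simple: "cartan_int (simple_coroot j) g = of_int (\<Sum>l\<in>UNIV. C j l * g l)"
proof -
  have "cartan_int (simple_coroot j) g = 2 * (d j * cpair j (real_vec g)) / (2 * d j)"
    unfolding cartan_int_def sqnorm_def real_vec_simple_coroot by (simp add: B_evec_right B_evec_self cpair_evec_self)
  also have "\<dots> = cpair j (real_vec g)" using dpos[of j] by simp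
  finally show ?thesis by (simp add: cpair_real_vec)
qed

lemma cartan_int_integral: "c \<in> root_coeffs C \<Longrightarrow> \<forall>g. cartan_int c g \<in> \<int>"
proof (induction rule: root_coeffs.induct)
  case (base j) then show ?case by (metis cartan_int_simple Ints_of_int)
next
  case (rstep c j) then show ?case by (simp add: cartan_int_refl_coeffs)
qed

lemma root_coeffs_reflect: "c \<in> root_coeffs C \<Longrightarrow> \<forall>g\<in>root_coeffs C. \<forall>m. of_int m = cartan_int c g \<longrightarrow> (\<lambda>k. g k - m * c k) \<in> root_coeffs C"
proof (induction rule: root_coeffs.induct)
  case (base j)
  show ?case
  proof (intro ballI allI impI)
    fix g m assume g: "g \<in> root_coeffs C" and m: "real_of_int m = cartan_int (simple_coroot j) g"
    then have "m = (\<Sum>l\<in>UNIV. C j l * g l)" by (metis cartan_int_simple of_int_eq_iff)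
    then have "(\<lambda>k. g k - m * simple_coroot j k) = refl_coeffs C j g" by (simp add: refl_coeffs_def)
    then show "(\<lambda>k. g k - m * simple_coroot j k) \<in> root_coeffs C" using g root_coeffs.rstep by metis
  qed
next
  case (rstep c i)
  show ?case
  proof (intro ballI allI impI)
    fix g m assume g: "g \<in> root_coeffs C" and m: "real_of_int m = cartan_int (refl_coeffs C i c) g"
    have "refl_coeffs C i g \<in> root_coeffs C" using g by (rule root_coeffs.rstep)
    moreover have "real_of_int m = cartan_int c (refl_coeffs C i g)" using m by (simp add: cartan_int_refl_coeffs)
    ultimately have "(\<lambda>k. refl_coeffs C i g k - m * c k) \<in> root_coeffs C" using rstep.IH by blast
    then have "refl_coeffs C i (\<lambda>k. refl_coeffs C i g k - m * c k) \<in> root_coeffs C" by (rule root_coeffs.rstep)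
    then show "(\<lambda>k. g k - m * refl_coeffs C i c k) \<in> root_coeffs C"
      by (simp add: refl_coeffs_diff refl_coeffs_involutive diag)
  qed
qed

(* The coroot coordinates transform like scoref under simple reflections. *)
lemma coroot_vec_refl_coeffs: "coroot_vec (refl_coeffs C i c) = (\<lambda>k. coroot_vec c k - (if k = i then \<Sum>l\<in>UNIV. coroot_vec c l * of_int (C l i) else 0))"
proof (rule ext)
  fix k
  have A: "(\<Sum>l\<in>UNIV. coroot_vec c l * of_int (C l i)) = 2 * d i * of_int (\<Sum>l\<in>UNIV. C i l * c l) / sqnorm c"
  proof -
    have "(\<Sum>l\<in>UNIV. coroot_vec c l * of_int (C l i)) = (\<Sum>l\<in>UNIV. 2 * (d i * of_int (C i l)) * of_int (c l) / sqnorm c)"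
      unfolding coroot_vec_def
      by (rule sum.cong[OF refl]) (simp add: dsym[of _ i] algebra_simps)
    also have "\<dots> = 2 * d i * of_int (\<Sum>l\<in>UNIV. C i l * c l) / sqnorm c"
      by (simp add: sum_divide_distrib sum_distrib_left algebra_simps)
    finally show ?thesis .
  qed
  show "coroot_vec (refl_coeffs C i c) k = coroot_vec c k - (if k = i then \<Sum>l\<in>UNIV. coroot_vec c l * of_int (C l i) else 0)"
  proof (cases "k = i")
    case True
    have "coroot_vec (refl_coeffs C i c) k = coroot_vec c k - 2 * d i * of_int (\<Sum>l\<in>UNIV. C i l * c l) / sqnorm c"
      unfolding coroot_vec_def sqnorm_refl_coeffs using True by (simp add: refl_coeffs_def simple_coroot_def right_diff_distrib diff_divide_distrib)
    then show ?thesis using True A by simp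
  next
    case False
    then show ?thesis unfolding coroot_vec_def sqnorm_refl_coeffs by (simp add: refl_coeffs_def simple_coroot_def)
  qed
qed

lemma coroot_vec_simple: "coroot_vec (simple_coroot j) = evec j"
proof (rule ext)
  fix k show "coroot_vec (simple_coroot j) k = evec j k"
  proof -
    have "coroot_vec (simple_coroot j) k = 2 * d k * of_int (simple_coroot j k) / (2 * d j)"
      unfolding coroot_vec_def sqnorm_def real_vec_simple_coroot B_evec_self ..
    then show ?thesis using dpos[of j] by (simp add: evec_def real_vec_def simple_coroot_def)
  qed
qed

lemma coroot_vec_integral: "c \<in> root_coeffs C \<Longrightarrow> \<forall>k. coroot_vec c k \<in> \<int>"
proof (induction rule: root_coeffs.induct)
  case (base j) then show ?case by (simp add: coroot_vec_simple evec_def real_vec_def)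
next
  case (rstep c j) then show ?case
    unfolding coroot_vec_refl_coeffs by (intro allI Ints_diff) (auto intro!: Ints_sum Ints_mult)
qed

(* The root system is stable under negation, since s_j alpha_j = - alpha_j. *)
lemma root_coeffs_neg: "c \<in> root_coeffs C \<Longrightarrow> (\<lambda>k. - c k) \<in> root_coeffs C"
proof (induction rule: root_coeffs.induct)
  case (base j)
  have "refl_coeffs C j (simple_coroot j) = (\<lambda>k. - simple_coroot j k)"
    unfolding refl_coeffs_def by (rule ext) (simp add: simple_coroot_def if_distrib diag cong: if_cong)
  then show ?case using root_coeffs.rstep[OF root_coeffs.base[where j=j and C=C], where j=j] by simp
next
  case (rstep c j) then show ?case using root_coeffs.rstep[OF rstep.IH, where j=j] by (simp add: refl_coeffs_neg)
qed

lemma B_real_vec_evec: "B (real_vec c) (evec j) = d j * of_int (root_wt C c j)"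
  by (simp add: B_evec_right cpair_real_vec root_wt_def)

lemma cartan_int_simple_right:
  "cartan_int c (simple_coroot j) = 2 * d j * of_int (root_wt C c j) / sqnorm c"
  unfolding cartan_int_def real_vec_simple_coroot B_sym[of "evec j"] B_real_vec_evec by simp

(* Cauchy-Schwarz: <alpha, alpha_j^vee> <alpha_j, alpha^vee> lies in [0, 4], and is below 4
   unless alpha is proportional to alpha_j. *)
lemma root_pairing_product:
  assumes cP: "c \<in> root_coeffs C"
  shows "0 \<le> of_int (root_wt C c j) * cartan_int c (simple_coroot j)"
    and "of_int (root_wt C c j) * cartan_int c (simple_coroot j) \<le> 4"
    and "\<forall>t. real_vec c \<noteq> (\<lambda>i. t * evec j i) \<Longrightarrow>
           of_int (root_wt C c j) * cartan_int c (simple_coroot j) < 4"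
proof -
  have Np: "0 < sqnorm c" using sqnorm_pos[OF cP] .
  note Bj = B_real_vec_evec[of c j]
  have prod: "of_int (root_wt C c j) * cartan_int c (simple_coroot j)
      = 2 * (B (real_vec c) (evec j))^2 / (d j * sqnorm c)"
    using dpos[of j] Np by (simp add: cartan_int_simple_right Bj power2_eq_square field_simps)
  show "0 \<le> of_int (root_wt C c j) * cartan_int c (simple_coroot j)"
    unfolding prod using dpos[of j] Np by simp
  have "(B (real_vec c) (evec j))^2 \<le> sqnorm c * (2 * d j)"
    using cauchy_schwarz[of "evec j" "real_vec c"] B_evec_self[of j] dpos[of j]
    unfolding sqnorm_def by simp
  then show "of_int (root_wt C c j) * cartan_int c (simple_coroot j) \<le> 4"
    unfolding prod using dpos[of j] Np by (simp add: divide_le_eq algebra_simps)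
  show "of_int (root_wt C c j) * cartan_int c (simple_coroot j) < 4"
    if np: "\<forall>t. real_vec c \<noteq> (\<lambda>i. t * evec j i)"
  proof -
    have "(B (real_vec c) (evec j))^2 < sqnorm c * (2 * d j)"
      using cauchy_schwarz_strict[OF np] B_evec_self[of j] dpos[of j] unfolding sqnorm_def by simp
    then show ?thesis unfolding prod using dpos[of j] Np by (simp add: divide_less_eq algebra_simps)
  qed
qed

lemma root_coeffs_minus_simple:
  assumes cP: "c \<in> root_coeffs C"
    and one: "root_wt C c j = 1 \<or> cartan_int c (simple_coroot j) = 1"
  shows "(\<lambda>k. c k - simple_coroot j k) \<in> root_coeffs C"
  using one
proof
  assume "root_wt C c j = 1"
  then have "refl_coeffs C j c = (\<lambda>k. c k - simple_coroot j k)"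
    unfolding refl_coeffs_def by (simp add: root_wt_def)
  then show ?thesis using root_coeffs.rstep[OF cP, where j=j] by simp
next
  assume "cartan_int c (simple_coroot j) = 1"
  then have "real_of_int 1 = cartan_int c (simple_coroot j)" by simp
  then have "(\<lambda>k. simple_coroot j k - 1 * c k) \<in> root_coeffs C"
    using root_coeffs_reflect[OF cP] root_coeffs.base[where j=j and C=C] by blast
  from root_coeffs_neg[OF this] show ?thesis by simp
qed

end

(* The sign dichotomy: no root has coefficients of both signs. *)

definition mixed :: "('i \<Rightarrow> int) \<Rightarrow> bool" where
  "mixed c \<longleftrightarrow> (\<exists>k. 0 < c k) \<and> (\<exists>k. c k < 0)"

definition coeff_size :: "('i::finite \<Rightarrow> int) \<Rightarrow> nat" where
  "coeff_size c = (\<Sum>k\<in>UNIV. nat \<bar>c k\<bar>)"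

context cartan begin

(* A mixed vector has positive inner product with some simple root alpha_j in its
   positive support (split c into positive and negative parts; the off-diagonal
   entries of C are non-positive). *)
lemma mixed_positive_direction:
  assumes "mixed c"
  shows "\<exists>j. 0 < c j \<and> 0 < B (real_vec c) (evec j)"
proof (rule ccontr)
  assume na: "\<not> ?thesis"
  define cp where "cp = (\<lambda>k. max (c k) 0)"
  define cn where "cn = (\<lambda>k. max (- c k) 0)"
  have rc: "real_vec c = (\<lambda>i. real_vec cp i - 1 * real_vec cn i)"
    unfolding real_vec_def cp_def cn_def by (rule ext) simp
  have "real_vec cp \<noteq> (\<lambda>i. 0)"
  proof
    assume "real_vec cp = (\<lambda>i. 0)"
    moreover obtain k where "0 < c k" using assms unfolding mixed_def by blast
    ultimately have "real_vec cp k = 0" "0 < c k" by auto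
    then show False unfolding real_vec_def cp_def by simp
  qed
  then have p1: "0 < B (real_vec cp) (real_vec cp)" by (rule B_pos_def)
  have p2: "B (real_vec cn) (real_vec cp) \<le> 0"
    unfolding B_def
  proof (intro sum_nonpos)
    fix i j
    show "real_vec cn i * d i * of_int (C i j) * real_vec cp j \<le> 0"
    proof (cases "i = j")
      case True then show ?thesis unfolding real_vec_def cn_def cp_def by (simp add: max_def)
    next
      case False
      have "0 \<le> real_vec cn i * d i * real_vec cp j" unfolding real_vec_def cn_def cp_def
        using dpos[of i] by simp
      moreover have "of_int (C i j) \<le> (0::real)" using offdiag[OF False] by simp
      ultimately have "(real_vec cn i * d i * real_vec cp j) * of_int (C i j) \<le> 0" by (rule mult_nonneg_nonpos)
      then show ?thesis by (simp add: algebra_simps)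
    qed
  qed
  have "0 < B (real_vec c) (real_vec cp)"
    using p1 p2 B_diff_left[of "real_vec cp" 1 "real_vec cn" "real_vec cp"] by (subst rc) simp
  also have "B (real_vec c) (real_vec cp) = (\<Sum>j\<in>UNIV. real_vec cp j * B (real_vec c) (evec j))"
    by (rule B_expand_right)
  also have "\<dots> \<le> 0"
  proof (intro sum_nonpos)
    fix j show "real_vec cp j * B (real_vec c) (evec j) \<le> 0"
    proof (cases "0 < c j")
      case True then have "B (real_vec c) (evec j) \<le> 0" using na not_less by blast
      moreover have "0 \<le> real_vec cp j" unfolding real_vec_def cp_def by simp
      ultimately show ?thesis by (simp add: mult_nonneg_nonpos)
    next
      case False then show ?thesis unfolding real_vec_def cp_def by simp
    qed
  qed
  finally show False by simp
qed

lemma Ints_pos_ge_one: "(x::real) \<in> \<int> \<Longrightarrow> 0 < x \<Longrightarrow> 1 \<le> x"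
  by (elim Ints_cases) simp

(* A mixed root all of whose smaller roots are unmixed has the shape alpha_j minus a
   non-negative combination: otherwise alpha - alpha_j would be a smaller mixed root. *)
lemma minimal_mixed_shape:
  assumes cP: "c \<in> root_coeffs C" and mx: "mixed c"
    and mn: "\<forall>c'\<in>root_coeffs C. coeff_size c' < coeff_size c \<longrightarrow> \<not> mixed c'"
  shows "\<exists>j. c j = 1 \<and> (\<forall>k. k \<noteq> j \<longrightarrow> c k \<le> 0)"
proof -
  obtain j where cj: "0 < c j" and Bj: "0 < B (real_vec c) (evec j)"
    using mixed_positive_direction[OF mx] by blast
  obtain kn where ckn: "c kn < 0" using mx unfolding mixed_def by blast
  have m1p: "0 < root_wt C c j"
    using Bj dpos[of j] by (simp add: B_real_vec_evec zero_less_mult_iff)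
  obtain m2 where m2: "cartan_int c (simple_coroot j) = of_int m2"
    using cartan_int_integral[OF cP] by (meson Ints_cases)
  have "0 < cartan_int c (simple_coroot j)"
    using m1p dpos[of j] sqnorm_pos[OF cP] by (simp add: cartan_int_simple_right)
  then have m2p: "0 < m2" using m2 by simp
  have np: "\<forall>t. real_vec c \<noteq> (\<lambda>i. t * evec j i)"
  proof (intro allI notI)
    fix t assume "real_vec c = (\<lambda>i. t * evec j i)"
    then have "real_vec c kn = t * evec j kn" by simp
    moreover have "kn \<noteq> j" using cj ckn by auto
    ultimately show False using ckn by (simp add: real_vec_def evec_def simple_coroot_def)
  qed
  have "root_wt C c j * m2 < 4"
    using root_pairing_product(3)[OF cP np]
    unfolding m2 of_int_mult[symmetric] of_int_less_numeral_iff .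
  then have "root_wt C c j = 1 \<or> m2 = 1"
  proof (rule contrapos_pp)
    assume "\<not> (root_wt C c j = 1 \<or> m2 = 1)"
    then have "2 \<le> root_wt C c j" "2 \<le> m2" using m1p m2p by auto
    then have "2 * 2 \<le> root_wt C c j * m2" by (intro mult_mono) auto
    then show "\<not> root_wt C c j * m2 < 4" by simp
  qed
  then have c'P: "(\<lambda>k. c k - simple_coroot j k) \<in> root_coeffs C" (is "?c' \<in> _")
    using root_coeffs_minus_simple[OF cP] m2 by auto
  have "coeff_size ?c' < coeff_size c"
    unfolding coeff_size_def
  proof (rule sum_strict_mono_ex1)
    show "\<forall>x\<in>UNIV. nat \<bar>?c' x\<bar> \<le> nat \<bar>c x\<bar>"
      using cj unfolding simple_coroot_def by auto
    show "\<exists>a\<in>UNIV. nat \<bar>?c' a\<bar> < nat \<bar>c a\<bar>"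
      using cj unfolding simple_coroot_def by (intro bexI[of _ j]) auto
  qed simp
  then have "\<not> mixed ?c'" using mn c'P by blast
  moreover have "?c' kn < 0" using ckn cj unfolding simple_coroot_def by auto
  ultimately have nonpos: "?c' k \<le> 0" for k unfolding mixed_def by (meson not_le)
  have "c j \<le> 1" using nonpos[of j] by (simp add: simple_coroot_def)
  moreover have "c k \<le> 0" if "k \<noteq> j" for k using nonpos[of k] that by (simp add: simple_coroot_def)
  ultimately show ?thesis using cj by (intro exI[of _ j]) auto
qed

(* alpha_j - alpha_k is never a root: the j-th coordinate 2 d_j / (c,c) of its coroot would
   be a positive integer, whereas (c,c) = 2 d_j + 2 d_k - 2 d_j C_jk > 2 d_j. *)
lemma simple_difference_not_root:
  assumes jk: "j \<noteq> k"
  shows "(\<lambda>i. simple_coroot j i - simple_coroot k i) \<notin> root_coeffs C"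
proof
  define c where "c = (\<lambda>i. simple_coroot j i - simple_coroot k i)"
  assume "(\<lambda>i. simple_coroot j i - simple_coroot k i) \<in> root_coeffs C"
  then have cP: "c \<in> root_coeffs C" unfolding c_def .
  have cj: "c j = 1" using jk unfolding c_def simple_coroot_def by simp
  have rvc: "real_vec c = (\<lambda>i. evec j i - evec k i)"
    unfolding c_def real_vec_def evec_def by simp
  have Np: "0 < sqnorm c" using sqnorm_pos[OF cP] .
  have "coroot_vec c j \<in> \<int>" using coroot_vec_integral[OF cP] by blast
  moreover have "coroot_vec c j = 2 * d j / sqnorm c" unfolding coroot_vec_def using cj by simp
  moreover have "0 < 2 * d j / sqnorm c" using dpos[of j] Np by simp
  ultimately have "1 \<le> 2 * d j / sqnorm c" using Ints_pos_ge_one by metis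
  then have le: "sqnorm c \<le> 2 * d j" using Np by (simp add: le_divide_eq)
  have "sqnorm c = B (evec j) (evec j) - B (evec j) (evec k) - (B (evec k) (evec j) - B (evec k) (evec k))"
    unfolding sqnorm_def rvc by (simp add: B_sub_left B_sub_right)
  also have "\<dots> = 2 * d j - d k * of_int (C k j) - (d j * of_int (C j k) - 2 * d k)"
    by (simp add: B_evec_self B_evec_right cpair_evec diag)
  finally have "sqnorm c = 2 * d j - d k * of_int (C k j) - (d j * of_int (C j k) - 2 * d k)" .
  moreover have "d k * of_int (C k j) \<le> 0" "d j * of_int (C j k) \<le> 0"
    using offdiag[of k j] offdiag[of j k] jk dpos[of k] dpos[of j]
    by (simp_all add: mult_nonneg_nonpos)
  moreover have "0 < d k" by (rule dpos)
  ultimately show False using le by linarith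
qed

(* The sign dichotomy, by induction on the size of the coefficients: a mixed root of
   minimal size and its negative would force it to be alpha_j - alpha_k. *)
lemma root_coeffs_not_mixed: "c \<in> root_coeffs C \<Longrightarrow> \<not> mixed c"
proof (induction "coeff_size c" arbitrary: c rule: less_induct)
  case (less c)
  show ?case
  proof
    assume mx: "mixed c"
    have mn: "\<forall>c'\<in>root_coeffs C. coeff_size c' < coeff_size c \<longrightarrow> \<not> mixed c'"
      using less.hyps by blast
    obtain j where cj: "c j = 1" "\<forall>k. k \<noteq> j \<longrightarrow> c k \<le> 0"
      using minimal_mixed_shape[OF less.prems mx mn] by blast
    define nc where "nc = (\<lambda>k. - c k)"
    have ncP: "nc \<in> root_coeffs C" unfolding nc_def using root_coeffs_neg[OF less.prems] .
    have mxn: "mixed nc" using mx unfolding mixed_def nc_def by auto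
    have "coeff_size nc = coeff_size c" unfolding coeff_size_def nc_def by simp
    then have mnn: "\<forall>c'\<in>root_coeffs C. coeff_size c' < coeff_size nc \<longrightarrow> \<not> mixed c'"
      using mn by simp
    obtain k where ck: "nc k = 1" "\<forall>l. l \<noteq> k \<longrightarrow> nc l \<le> 0"
      using minimal_mixed_shape[OF ncP mxn mnn] by blast
    have jk: "j \<noteq> k" using cj ck unfolding nc_def by auto
    have c0: "c l = 0" if "l \<noteq> j" "l \<noteq> k" for l
      using cj(2) ck(2) that unfolding nc_def by (meson neg_le_0_iff_le order_antisym)
    have "c = (\<lambda>i. simple_coroot j i - simple_coroot k i)"
    proof
      fix i show "c i = simple_coroot j i - simple_coroot k i"
        using cj ck c0[of i] jk unfolding nc_def simple_coroot_def
        by (cases "i = j"; cases "i = k") auto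
    qed
    then show False using simple_difference_not_root[OF jk] less.prems by simp
  qed
qed

end

(* Finiteness: the pairings of a root with the simple coroots are bounded by 4, and a
   root is determined by its weight. *)

lemma finite_bounded_funs: "finite (B::'b set) \<Longrightarrow> finite {f::'a::finite \<Rightarrow> 'b. \<forall>x. f x \<in> B}"
  using finite_set_of_finite_funs[of "UNIV::'a set" B undefined] by simp

context cartan begin

lemma root_wt_bound:
  assumes cP: "c \<in> root_coeffs C"
  shows "\<bar>root_wt C c k\<bar> \<le> 4"
proof (cases "root_wt C c k = 0")
  case False
  obtain m2 where m2: "cartan_int c (simple_coroot k) = of_int m2"
    using cartan_int_integral[OF cP] by (meson Ints_cases)
  have "m2 \<noteq> 0"
    using m2 False dpos[of k] sqnorm_pos[OF cP] by (auto simp: cartan_int_simple_right)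
  have "0 \<le> root_wt C c k * m2" "root_wt C c k * m2 \<le> 4"
    using root_pairing_product(1,2)[OF cP, of k]
    unfolding m2 of_int_mult[symmetric] of_int_0_le_iff of_int_le_numeral_iff .
  have "\<bar>root_wt C c k\<bar> * 1 \<le> \<bar>root_wt C c k\<bar> * \<bar>m2\<bar>"
    using \<open>m2 \<noteq> 0\<close> by (intro mult_left_mono) auto
  also have "\<dots> = root_wt C c k * m2"
    using \<open>0 \<le> root_wt C c k * m2\<close> by (simp add: abs_mult[symmetric])
  also have "\<dots> \<le> 4" by fact
  finally show ?thesis by simp
qed simp

(* root_wt C is injective since C is non-degenerate. *)
lemma root_wt_inj: "root_wt C c = root_wt C c' \<Longrightarrow> c = c'"
proof (rule ccontr)
  assume eq: "root_wt C c = root_wt C c'" and ne: "c \<noteq> c'"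
  define v where "v = (\<lambda>i. real_vec c i - real_vec c' i)"
  have "v \<noteq> (\<lambda>i. 0)"
  proof
    assume "v = (\<lambda>i. 0)"
    then have "\<And>i. c i = c' i" unfolding v_def real_vec_def by (metis of_int_eq_iff right_minus_eq)
    then show False using ne by auto
  qed
  then have "0 < B v v" by (rule B_pos_def)
  moreover have "B v v = (\<Sum>i\<in>UNIV. v i * d i * (\<Sum>j\<in>UNIV. of_int (C i j) * v j))"
    unfolding B_def by (simp add: sum_distrib_left algebra_simps)
  moreover have "(\<Sum>j\<in>UNIV. of_int (C i j) * v j) = of_int (root_wt C c i - root_wt C c' i)" for i
    unfolding v_def real_vec_def root_wt_def by (simp add: sum_subtractf algebra_simps)
  ultimately show False using eq by simp
qed

lemma root_coeffs_finite: "finite (root_coeffs C)"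
proof -
  have "root_wt C ` root_coeffs C \<subseteq> {a. \<forall>k. a k \<in> {-4..4}}"
  proof (intro subsetI CollectI allI)
    fix a k assume "a \<in> root_wt C ` root_coeffs C"
    then obtain c where "c \<in> root_coeffs C" "a = root_wt C c" by blast
    then have "\<bar>a k\<bar> \<le> 4" using root_wt_bound by simp
    then show "a k \<in> {-4..4}" by (simp add: abs_le_iff)
  qed
  moreover have "finite {a::'i \<Rightarrow> int. \<forall>k. a k \<in> {-4..4}}" by (rule finite_bounded_funs) simp
  ultimately have "finite (root_wt C ` root_coeffs C)" by (rule finite_subset)
  moreover have "inj_on (root_wt C) (root_coeffs C)" by (auto intro: inj_onI root_wt_inj)
  ultimately show ?thesis using finite_imageD by blast
qed

end

definition wcomp :: "'i weyl \<Rightarrow> 'i weyl \<Rightarrow> 'i weyl" where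
  "wcomp w1 w2 = (fst w1 \<circ> fst w2, snd w1 \<circ> snd w2)"

lemma refl_coeffs_apply: "refl_coeffs C i c j = c j - (if j = i then (\<Sum>l\<in>UNIV. C i l * c l) else 0)"
  unfolding refl_coeffs_def simple_coroot_def by simp

lemma sref_root_wt: "sref C i (root_wt C c) = root_wt C (refl_coeffs C i c)"
proof (rule ext)
  fix k
  have "root_wt C (refl_coeffs C i c) k = (\<Sum>j\<in>UNIV. C k j * c j - (if j = i then C k j * (\<Sum>l\<in>UNIV. C i l * c l) else 0))"
    unfolding root_wt_def refl_coeffs_apply by (rule sum.cong) (auto simp: right_diff_distrib)
  also have "\<dots> = root_wt C c k - C k i * root_wt C c i"
    by (simp add: sum_subtractf sum.delta root_wt_def)
  finally show "sref C i (root_wt C c) k = root_wt C (refl_coeffs C i c) k" unfolding sref_def by (simp add: mult.commute)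
qed

lemma sref_sref: "C j j = 2 \<Longrightarrow> sref C j (sref C j x) = x"
  unfolding sref_def by (rule ext) (simp add: algebra_simps)

lemma scoref_scoref: "C j j = 2 \<Longrightarrow> scoref C j (scoref C j e) = e"
proof -
  assume cj: "C j j = 2"
  have t: "(\<Sum>k\<in>UNIV. scoref C j e k * C k j) = - (\<Sum>k\<in>UNIV. e k * C k j)"
  proof -
    have "(\<Sum>k\<in>UNIV. scoref C j e k * C k j) = (\<Sum>k\<in>UNIV. e k * C k j - (if k = j then (\<Sum>k\<in>UNIV. e k * C k j) * C j j else 0))"
      unfolding scoref_def by (rule sum.cong) (auto simp: algebra_simps)
    also have "\<dots> = (\<Sum>k\<in>UNIV. e k * C k j) - (\<Sum>k\<in>UNIV. e k * C k j) * C j j"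
      by (simp add: sum_subtractf sum.delta)
    finally show ?thesis using cj by simp
  qed
  show ?thesis unfolding scoref_def[of C j "scoref C j e"] t by (rule ext) (simp add: scoref_def)
qed

lemma weyl0_comp: "w1 \<in> weyl0 C \<Longrightarrow> w2 \<in> weyl0 C \<Longrightarrow> wcomp w1 w2 \<in> weyl0 C"
proof (induction rule: weyl0.induct)
  case one then show ?case by (simp add: wcomp_def weyl_one_def)
next
  case (step w j)
  have "wcomp (sref C j \<circ> fst w, scoref C j \<circ> snd w) w2
      = (sref C j \<circ> fst (wcomp w w2), scoref C j \<circ> snd (wcomp w w2))"
    by (simp add: wcomp_def comp_assoc)
  then show ?case using weyl0.step[OF step.IH[OF step.prems]] by simp
qed

lemma simple_refl_weyl0: "(sref C j, scoref C j) \<in> weyl0 C"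
  using weyl0.step[OF weyl0.one, where j=j and C=C] by (simp add: weyl_one_def)

lemma wcomp_assoc: "wcomp (wcomp a b) c = wcomp a (wcomp b c)"
  by (simp add: wcomp_def comp_assoc)

lemma wcomp_one: "wcomp weyl_one w = w" "wcomp w weyl_one = w"
  by (simp_all add: wcomp_def weyl_one_def)

lemma weyl0_inverse:
  assumes diag: "\<And>i. C i i = 2"
  shows "w \<in> weyl0 C \<Longrightarrow> \<exists>w'\<in>weyl0 C. wcomp w' w = weyl_one \<and> wcomp w w' = weyl_one"
proof (induction rule: weyl0.induct)
  case one then show ?case using weyl0.one by (auto simp: wcomp_one)
next
  case (step w j)
  obtain w' where w': "w' \<in> weyl0 C" "wcomp w' w = weyl_one" "wcomp w w' = weyl_one" using step.IH by blast
  let ?s = "(sref C j, scoref C j)"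
  have ss: "wcomp ?s ?s = weyl_one"
    by (simp add: wcomp_def weyl_one_def fun_eq_iff sref_sref scoref_scoref diag)
  have e: "(sref C j \<circ> fst w, scoref C j \<circ> snd w) = wcomp ?s w" by (simp add: wcomp_def)
  have "wcomp (wcomp w' ?s) (wcomp ?s w) = weyl_one"
    by (metis wcomp_assoc ss wcomp_one w'(2))
  moreover have "wcomp (wcomp ?s w) (wcomp w' ?s) = weyl_one"
    by (metis wcomp_assoc ss wcomp_one w'(3))
  moreover have "wcomp w' ?s \<in> weyl0 C" using weyl0_comp[OF w'(1) simple_refl_weyl0] .
  ultimately show ?case unfolding e by blast
qed

context cartan begin

lemma weyl0_has_inverse: "w \<in> weyl0 C \<Longrightarrow> \<exists>w'\<in>weyl0 C. wcomp w' w = weyl_one \<and> wcomp w w' = weyl_one"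
  using weyl0_inverse diag by blast

lemma root_wt_simple: "root_wt C (simple_coroot j) = simple_root C j"
  unfolding root_wt_def simple_root_def by (rule ext) (simp add: mult.commute sum_times_simple_coroot)

lemma weyl0_simple_root_images:
  "w \<in> weyl0 C \<Longrightarrow> \<forall>j. \<exists>c\<in>root_coeffs C. fst w (simple_root C j) = root_wt C c
        \<and> (\<forall>k. of_int (snd w (simple_coroot j) k) = coroot_vec c k)"
proof (induction rule: weyl0.induct)
  case one
  show ?case
  proof
    fix j show "\<exists>c\<in>root_coeffs C. fst weyl_one (simple_root C j) = root_wt C c \<and> (\<forall>k. of_int (snd weyl_one (simple_coroot j) k) = coroot_vec c k)"
      by (rule bexI[of _ "simple_coroot j"]) (auto simp: weyl_one_def root_wt_simple coroot_vec_simple evec_def real_vec_def intro: root_coeffs.base)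
  qed
next
  case (step w i)
  show ?case
  proof
    fix j
    obtain c where c: "c \<in> root_coeffs C" "fst w (simple_root C j) = root_wt C c" "\<forall>k. of_int (snd w (simple_coroot j) k) = coroot_vec c k"
      using step.IH by blast
    have "refl_coeffs C i c \<in> root_coeffs C" using root_coeffs.rstep[OF c(1)] .
    moreover have "fst (sref C i \<circ> fst w, scoref C i \<circ> snd w) (simple_root C j) = root_wt C (refl_coeffs C i c)"
      using c(2) by (simp add: sref_root_wt)
    moreover have "\<forall>k. of_int (snd (sref C i \<circ> fst w, scoref C i \<circ> snd w) (simple_coroot j) k) = coroot_vec (refl_coeffs C i c) k"
      using c(3) by (simp add: scoref_def coroot_vec_refl_coeffs)
    ultimately show "\<exists>c\<in>root_coeffs C. fst (sref C i \<circ> fst w, scoref C i \<circ> snd w) (simple_root C j) = root_wt C c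
        \<and> (\<forall>k. of_int (snd (sref C i \<circ> fst w, scoref C i \<circ> snd w) (simple_coroot j) k) = coroot_vec c k)"
      by blast
  qed
qed

lemma root_coeffs_weyl_image: "c \<in> root_coeffs C \<Longrightarrow> \<exists>w\<in>weyl0 C. \<exists>j. fst w (simple_root C j) = root_wt C c"
proof (induction rule: root_coeffs.induct)
  case (base j) show ?case by (intro bexI[OF _ weyl0.one] exI[of _ j]) (simp add: weyl_one_def root_wt_simple)
next
  case (rstep c i)
  then obtain w j where "w \<in> weyl0 C" "fst w (simple_root C j) = root_wt C c" by blast
  then show ?case using weyl0.step[of w C i]
    by (intro bexI[of _ "(sref C i \<circ> fst w, scoref C i \<circ> snd w)"] exI[of _ j]) (simp_all add: sref_root_wt)
qed

lemma roots_eq_root_wt: "roots C = root_wt C ` root_coeffs C"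
proof
  show "roots C \<subseteq> root_wt C ` root_coeffs C" unfolding roots_def using weyl0_simple_root_images by fastforce
  show "root_wt C ` root_coeffs C \<subseteq> roots C"
  proof
    fix a assume "a \<in> root_wt C ` root_coeffs C"
    then obtain c where "c \<in> root_coeffs C" "a = root_wt C c" by blast
    then obtain w j where "w \<in> weyl0 C" "fst w (simple_root C j) = a" using root_coeffs_weyl_image by metis
    then show "a \<in> roots C" unfolding roots_def by blast
  qed
qed

end

lemma sref_add_wt: "sref C j (add_wt x y) = add_wt (sref C j x) (sref C j y)"
  unfolding sref_def add_wt_def by (rule ext) (simp add: algebra_simps)

lemma sref_zero: "sref C j zero_wt = zero_wt"
  unfolding sref_def zero_wt_def by simp

lemma weyl0_additive: "w \<in> weyl0 C \<Longrightarrow> fst w (add_wt x y) = add_wt (fst w x) (fst w y) \<and> fst w zero_wt = zero_wt"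
  by (induction rule: weyl0.induct) (simp_all add: weyl_one_def sref_add_wt sref_zero)

lemma pairing_simple_coroot: "pairing y (simple_coroot k) = y k"
  unfolding pairing_def using sum_times_simple_coroot[of y k] by (simp add: mult.commute)

lemma pairing_simple_refl:
  assumes "C j j = 2"
  shows "pairing (sref C j y) (scoref C j b) = pairing y b"
proof -
  define t where "t = (\<Sum>k\<in>UNIV. b k * C k j)"
  have "pairing (sref C j y) (scoref C j b)
     = (\<Sum>i\<in>UNIV. (b i * y i - y j * (b i * C i j)) - (if i = j then t * y i - t * y j * C i j else 0))"
    unfolding pairing_def sref_def scoref_def t_def[symmetric]
    by (rule sum.cong) (auto simp: algebra_simps)
  also have "\<dots> = pairing y b - y j * t - (t * y j - t * y j * C j j)"
    by (simp add: sum_subtractf sum.delta pairing_def sum_distrib_left t_def mult.commute)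
  finally show ?thesis using assms by simp
qed

context cartan begin

lemma weyl0_pairing: "w \<in> weyl0 C \<Longrightarrow> pairing (fst w x) (snd w b) = pairing x b"
  by (induction rule: weyl0.induct) (simp_all add: weyl_one_def pairing_simple_refl diag)

lemma root_wt_neg: "root_wt C (\<lambda>k. - c k) = (\<lambda>i. - root_wt C c i)"
  unfolding root_wt_def by (simp add: sum_negf)

lemma posroot_iff: "posroot C a \<longleftrightarrow> (\<exists>c\<in>root_coeffs C. a = root_wt C c \<and> (\<forall>k. 0 \<le> c k))"
proof
  assume "posroot C a"
  then obtain c' where a: "a \<in> roots C" "\<forall>j. 0 \<le> c' j" "a = root_wt C c'"
    unfolding posroot_def root_wt_def by blast
  then obtain c where c: "c \<in> root_coeffs C" "a = root_wt C c" using roots_eq_root_wt by blast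
  then have "c' = c" using a root_wt_inj by simp
  then show "\<exists>c\<in>root_coeffs C. a = root_wt C c \<and> (\<forall>k. 0 \<le> c k)" using a c by blast
next
  assume "\<exists>c\<in>root_coeffs C. a = root_wt C c \<and> (\<forall>k. 0 \<le> c k)"
  then obtain c where c: "c \<in> root_coeffs C" "a = root_wt C c" "\<forall>k. 0 \<le> c k" by blast
  then have "a \<in> roots C" using roots_eq_root_wt by blast
  then show "posroot C a" unfolding posroot_def using c unfolding root_wt_def by blast
qed

lemma negroot_iff: "negroot C a \<longleftrightarrow> (\<exists>c\<in>root_coeffs C. a = root_wt C c \<and> (\<forall>k. c k \<le> 0))"
proof
  assume "negroot C a"
  then obtain c where c: "c \<in> root_coeffs C" "(\<lambda>i. - a i) = root_wt C c" "\<forall>k. 0 \<le> c k"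
    unfolding negroot_def posroot_iff by blast
  have "a = root_wt C (\<lambda>k. - c k)" using c(2) unfolding root_wt_neg by (metis minus_minus)
  then show "\<exists>c\<in>root_coeffs C. a = root_wt C c \<and> (\<forall>k. c k \<le> 0)" using root_coeffs_neg[OF c(1)] c(3) by force
next
  assume "\<exists>c\<in>root_coeffs C. a = root_wt C c \<and> (\<forall>k. c k \<le> 0)"
  then obtain c where c: "c \<in> root_coeffs C" "a = root_wt C c" "\<forall>k. c k \<le> 0" by blast
  have "(\<lambda>i. - a i) = root_wt C (\<lambda>k. - c k)" using c(2) by (simp add: root_wt_neg)
  then show "negroot C a" unfolding negroot_def posroot_iff using root_coeffs_neg[OF c(1)] c(3) by force
qed

lemma root_pos_or_neg: "a \<in> roots C \<Longrightarrow> posroot C a \<or> negroot C a"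
proof -
  assume "a \<in> roots C"
  then obtain c where c: "c \<in> root_coeffs C" "a = root_wt C c" using roots_eq_root_wt by blast
  have "\<not> mixed c" using root_coeffs_not_mixed[OF c(1)] .
  then have "(\<forall>k. 0 \<le> c k) \<or> (\<forall>k. c k \<le> 0)" unfolding mixed_def by (meson not_le)
  then show ?thesis unfolding posroot_iff negroot_iff using c by blast
qed

lemma root_not_pos_and_neg: "\<not> (posroot C a \<and> negroot C a)"
proof
  assume "posroot C a \<and> negroot C a"
  then obtain c c' where c: "c \<in> root_coeffs C" "a = root_wt C c" "\<forall>k. 0 \<le> c k"
    and c': "c' \<in> root_coeffs C" "a = root_wt C c'" "\<forall>k. c' k \<le> 0"
    unfolding posroot_iff negroot_iff by blast
  have "c' = c" using c c' root_wt_inj by simp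
  then have "c = (\<lambda>k. 0)" using c(3) c'(3) by (simp add: fun_eq_iff order_antisym)
  then have "sqnorm c = 0" unfolding sqnorm_def B_def real_vec_def by simp
  then show False using sqnorm_pos[OF c(1)] by simp
qed

lemma roots_coroots_coeffs: "p \<in> roots_coroots C \<Longrightarrow> \<exists>c\<in>root_coeffs C. fst p = root_wt C c \<and> (\<forall>k. of_int (snd p k) = coroot_vec c k)"
  unfolding roots_coroots_def using weyl0_simple_root_images by fastforce

lemma roots_coroots_finite: "finite (roots_coroots C)"
proof -
  have "roots_coroots C \<subseteq> (\<lambda>c. (root_wt C c, \<lambda>k. \<lfloor>coroot_vec c k\<rfloor>)) ` root_coeffs C"
  proof
    fix p assume "p \<in> roots_coroots C"
    then obtain c where c: "c \<in> root_coeffs C" "fst p = root_wt C c" "\<forall>k. of_int (snd p k) = coroot_vec c k"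
      using roots_coroots_coeffs by blast
    then have "snd p = (\<lambda>k. \<lfloor>coroot_vec c k\<rfloor>)" by (metis floor_of_int)
    then have "p = (root_wt C c, \<lambda>k. \<lfloor>coroot_vec c k\<rfloor>)" using c(2) by (metis prod.collapse)
    then show "p \<in> (\<lambda>c. (root_wt C c, \<lambda>k. \<lfloor>coroot_vec c k\<rfloor>)) ` root_coeffs C" using c(1) by blast
  qed
  then show ?thesis using root_coeffs_finite finite_subset by blast
qed

lemma roots_coroots_root: "p \<in> roots_coroots C \<Longrightarrow> fst p \<in> roots C"
  using roots_coroots_coeffs roots_eq_root_wt by blast

lemma roots_coroots_pos_coroot: "p \<in> roots_coroots C \<Longrightarrow> posroot C (fst p) \<Longrightarrow> 0 \<le> snd p k"
proof -
  assume p: "p \<in> roots_coroots C" and pp: "posroot C (fst p)"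
  obtain c where c: "c \<in> root_coeffs C" "fst p = root_wt C c" "\<forall>k. of_int (snd p k) = coroot_vec c k" using roots_coroots_coeffs[OF p] by blast
  obtain c' where c': "c' \<in> root_coeffs C" "fst p = root_wt C c'" "\<forall>k. 0 \<le> c' k" using pp unfolding posroot_iff by blast
  have "c' = c" using c c' root_wt_inj by simp
  then have "0 \<le> coroot_vec c k" unfolding coroot_vec_def using c'(3) dpos[of k] sqnorm_pos[OF c(1)] by simp
  then show ?thesis using c(3) by (metis of_int_0_le_iff)
qed

lemma weyl0_roots: "w \<in> weyl0 C \<Longrightarrow> a \<in> roots C \<Longrightarrow> fst w a \<in> roots C"
proof -
  assume w: "w \<in> weyl0 C" and "a \<in> roots C"
  then obtain w1 j where "w1 \<in> weyl0 C" "a = fst w1 (simple_root C j)" unfolding roots_def by blast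
  then have "fst w a = fst (wcomp w w1) (simple_root C j)" "wcomp w w1 \<in> weyl0 C"
    using weyl0_comp[OF w] by (auto simp: wcomp_def)
  then show ?thesis unfolding roots_def by blast
qed

(* W_0-orbits in X are finite: the coordinates of w x are pairings of x with coroots. *)
lemma orbit_finite: "finite (orbit C x)"
proof -
  define CR where "CR = (\<lambda>c. \<lambda>k. \<lfloor>coroot_vec c k\<rfloor>) ` root_coeffs C"
  have fCR: "finite CR" unfolding CR_def using root_coeffs_finite by simp
  have "orbit C x \<subseteq> {y. \<forall>k. y k \<in> (\<lambda>b. pairing x b) ` CR}"
  proof
    fix y assume "y \<in> orbit C x"
    then obtain w where w: "w \<in> weyl0 C" "y = fst w x" unfolding orbit_def by blast
    obtain w' where w': "w' \<in> weyl0 C" "wcomp w w' = weyl_one" using weyl0_has_inverse[OF w(1)] by blast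
    show "y \<in> {y. \<forall>k. y k \<in> (\<lambda>b. pairing x b) ` CR}"
    proof (intro CollectI allI)
      fix k
      have e: "snd w (snd w' (simple_coroot k)) = simple_coroot k"
        using w'(2) unfolding wcomp_def weyl_one_def by (metis comp_apply id_apply prod.inject)
      have "y k = pairing (fst w x) (snd w (snd w' (simple_coroot k)))"
        unfolding e w(2) pairing_simple_coroot ..
      also have "\<dots> = pairing x (snd w' (simple_coroot k))" using weyl0_pairing[OF w(1)] .
      finally have yk: "y k = pairing x (snd w' (simple_coroot k))" .
      obtain c where c: "c \<in> root_coeffs C" "\<forall>k'. of_int (snd w' (simple_coroot k) k') = coroot_vec c k'"
        using weyl0_simple_root_images[OF w'(1)] by blast
      have "snd w' (simple_coroot k) = (\<lambda>k'. \<lfloor>coroot_vec c k'\<rfloor>)" using c(2) by (metis floor_of_int)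
      then have "snd w' (simple_coroot k) \<in> CR" unfolding CR_def using c(1) by blast
      then show "y k \<in> (\<lambda>b. pairing x b) ` CR" using yk by blast
    qed
  qed
  moreover have "finite {y::'i \<Rightarrow> int. \<forall>k. y k \<in> (\<lambda>b. pairing x b) ` CR}"
    by (rule finite_bounded_funs) (simp add: fCR)
  ultimately show ?thesis by (rule finite_subset)
qed

end

(* The fundamental weights lie in X^+: for them l(w t_x) splits as l(w) + l(t_x). *)

lemma pairing_simple_coroot_left: "pairing (simple_coroot i) b = b i"
  unfolding pairing_def using sum_times_simple_coroot[of b i] by simp

lemma pairing_zero: "pairing zero_wt b = 0"
  unfolding pairing_def zero_wt_def by simp

context cartan begin

lemma fundamental_weight_Xplus: "simple_coroot i \<in> Xplus C"
  unfolding Xplus_def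
proof (intro CollectI ballI)
  fix w assume w: "w \<in> weyl0 C"
  define P where "P = {p \<in> roots_coroots C. posroot C (fst p)}"
  define Pm where "Pm = (\<lambda>f. {p \<in> roots_coroots C. posroot C (fst p) \<and> negroot C (f (fst p))})"
  define Pp where "Pp = (\<lambda>f. {p \<in> roots_coroots C. posroot C (fst p) \<and> posroot C (f (fst p))})"
  have fin: "finite (Pm f)" "finite (Pp f)" "finite P" for f
    unfolding Pm_def Pp_def P_def using roots_coroots_finite by auto
  have un: "Pm (fst w) \<union> Pp (fst w) = P"
    unfolding Pm_def Pp_def P_def using root_pos_or_neg weyl0_roots[OF w] roots_coroots_root by blast
  have dj: "Pm (fst w) \<inter> Pp (fst w) = {}"
    unfolding Pm_def Pp_def using root_not_pos_and_neg by blast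
  have m1: "Pm id = {}" unfolding Pm_def using root_not_pos_and_neg by auto
  have p1: "Pp id = P" unfolding Pp_def P_def by auto
  have len_eq: "len C (v, x) = (\<Sum>p\<in>Pm (fst v). \<bar>pairing x (snd p) + 1\<bar>) + (\<Sum>p\<in>Pp (fst v). \<bar>pairing x (snd p)\<bar>)" for v x
    unfolding len_def Pm_def Pp_def by simp
  have nn: "0 \<le> snd p i" if "p \<in> P" for p using that roots_coroots_pos_coroot unfolding P_def by blast
  have A: "len C (w, simple_coroot i) = int (card (Pm (fst w))) + (\<Sum>p\<in>P. snd p i)"
  proof -
    have "len C (w, simple_coroot i) = (\<Sum>p\<in>Pm (fst w). snd p i + 1) + (\<Sum>p\<in>Pp (fst w). snd p i)"
      unfolding len_eq pairing_simple_coroot_left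
  proof (intro arg_cong2[where f="(+)"] sum.cong refl)
      fix p assume "p \<in> Pm (fst w)"
      then have "0 \<le> snd p i" using nn un by blast
      then show "\<bar>snd p i + 1\<bar> = snd p i + 1" by simp
    next
      fix p assume "p \<in> Pp (fst w)"
      then have "0 \<le> snd p i" using nn un by blast
      then show "\<bar>snd p i\<bar> = snd p i" by simp
    qed
    also have "\<dots> = int (card (Pm (fst w))) + ((\<Sum>p\<in>Pm (fst w). snd p i) + (\<Sum>p\<in>Pp (fst w). snd p i))"
      by (simp add: sum.distrib)
    also have "(\<Sum>p\<in>Pm (fst w). snd p i) + (\<Sum>p\<in>Pp (fst w). snd p i) = (\<Sum>p\<in>P. snd p i)"
      using sum.union_disjoint[OF fin(1) fin(2) dj, of "\<lambda>p. snd p i"] un by simp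
    finally show ?thesis .
  qed
  have B0: "len C (w, zero_wt) = int (card (Pm (fst w)))"
    unfolding len_eq pairing_zero by simp
  have C1: "len C (weyl_one, simple_coroot i) = (\<Sum>p\<in>P. snd p i)"
    unfolding len_eq pairing_simple_coroot_left by (simp add: weyl_one_def m1 p1 nn)
  show "len C (w, simple_coroot i) = len C (w, zero_wt) + len C (weyl_one, simple_coroot i)"
    using A B0 C1 by simp
qed

end

lemma add_wt_zero: "add_wt zero_wt x = x" "add_wt x zero_wt = x"
  by (simp_all add: add_wt_def zero_wt_def)

lemma torus_mult: "s \<in> torus \<Longrightarrow> s (add_wt x y) = s x * s y"
  unfolding torus_def by blast

lemma torus_nonzero:
  assumes "s \<in> torus" shows "s x \<noteq> 0"
proof
  assume "s x = 0"
  have "add_wt x (\<lambda>i. - x i) = zero_wt" by (simp add: add_wt_def zero_wt_def)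
  moreover have "s (add_wt x (\<lambda>i. - x i)) = s x * s (\<lambda>i. - x i)" by (rule torus_mult[OF assms])
  ultimately have "s zero_wt = s x * s (\<lambda>i. - x i)" by simp
  then show False using assms \<open>s x = 0\<close> unfolding torus_def by simp
qed

lemma torus_eq_multiple:
  assumes s1: "s1 \<in> torus" and s2: "s2 \<in> torus" and e: "s1 a = s2 a"
  shows "s1 (\<lambda>i. m * a i) = s2 (\<lambda>i. m * a i)"
proof (induction m rule: int_induct[where k=0])
  case base
  have "(\<lambda>i. 0 * a i) = zero_wt" by (simp add: zero_wt_def)
  then show ?case using s1 s2 unfolding torus_def by simp
next
  case (step1 m)
  have "(\<lambda>i. (m + 1) * a i) = add_wt (\<lambda>i. m * a i) a" by (simp add: add_wt_def algebra_simps)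
  then show ?case using step1 torus_mult[OF s1] torus_mult[OF s2] e by simp
next
  case (step2 m)
  have "(\<lambda>i. m * a i) = add_wt (\<lambda>i. (m - 1) * a i) a" by (simp add: add_wt_def algebra_simps)
  then have "s1 (add_wt (\<lambda>i. (m - 1) * a i) a) = s2 (add_wt (\<lambda>i. (m - 1) * a i) a)"
    using step2 by simp
  then have "s1 (\<lambda>i. (m - 1) * a i) * s1 a = s2 (\<lambda>i. (m - 1) * a i) * s2 a"
    using torus_mult[OF s1] torus_mult[OF s2] by simp
  then show ?case using e torus_nonzero[OF s2, of a] by simp
qed

lemma torus_trivial: "(\<lambda>x. 1) \<in> torus"
  unfolding torus_def by simp

lemma torus_multiple_one:
  assumes s: "s \<in> torus" and a: "s a = 1"
  shows "s (\<lambda>i. m * a i) = 1"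
  using torus_eq_multiple[OF s torus_trivial, of a m] a by simp

(* A character is determined by its values on the fundamental weights, which form a
   basis of X. *)
lemma torus_eq_on_basis:
  assumes s1: "s1 \<in> torus" and s2: "s2 \<in> torus" and e: "\<And>i. s1 (simple_coroot i) = s2 (simple_coroot i)"
  shows "s1 = (s2 :: ('i::finite) wt \<Rightarrow> complex)"
proof
  fix x :: "'i wt"
  define xF where "xF = (\<lambda>F k. if k \<in> F then x k else 0)"
  have fi: "s1 (xF F) = s2 (xF F)" if "finite F" for F
    using that
  proof (induction F rule: finite_induct)
    case empty
    have "xF {} = zero_wt" by (simp add: xF_def zero_wt_def)
    then show ?case using s1 s2 unfolding torus_def by simp
  next
    case (insert i F)
    have "xF (insert i F) = add_wt (xF F) (\<lambda>k. x i * simple_coroot i k)"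
      using insert.hyps unfolding xF_def add_wt_def simple_coroot_def by (rule_tac ext) auto
    then show ?case using insert.IH torus_mult[OF s1] torus_mult[OF s2] torus_eq_multiple[OF s1 s2 e] by simp
  qed
  have "xF UNIV = x" by (simp add: xF_def)
  then show "s1 x = s2 x" using fi[OF finite_UNIV] by simp
qed

context cartan begin

lemma simple_root_roots: "simple_root C j \<in> roots C"
  unfolding roots_def by (rule CollectI, rule exI[of _ weyl_one], rule exI[of _ j]) (simp add: weyl_one_def weyl0.one[unfolded weyl_one_def])

lemma centerG_torus: "s \<in> centerG C \<Longrightarrow> s \<in> torus"
  unfolding centerG_def by blast

lemma sref_eq_add_wt: "sref C j y = add_wt y (\<lambda>i. (- y j) * simple_root C j i)"
  unfolding sref_def add_wt_def simple_root_def by (rule ext) (simp add: algebra_simps)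

lemma centerG_weyl_invariant: "s \<in> centerG C \<Longrightarrow> w \<in> weyl0 C \<Longrightarrow> s (fst w x) = s x"
proof -
  assume s: "s \<in> centerG C" and w: "w \<in> weyl0 C"
  have st: "s \<in> torus" using s by (rule centerG_torus)
  have sa: "s (simple_root C j) = 1" for j using s simple_root_roots unfolding centerG_def by blast
  from w show ?thesis
  proof (induction rule: weyl0.induct)
    case one then show ?case by (simp add: weyl_one_def)
  next
    case (step w j)
    have "s (sref C j (fst w x)) = s (fst w x) * s (\<lambda>i. (- fst w x j) * simple_root C j i)"
      unfolding sref_eq_add_wt by (rule torus_mult[OF st])
    also have "\<dots> = s (fst w x)" using torus_multiple_one[OF st sa, of "- fst w x j" j] by simp
    finally show ?case using step.IH by simp
  qed
qed

lemma orbit_self: "x \<in> orbit C x"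
  unfolding orbit_def by (rule CollectI, rule exI[of _ weyl_one]) (simp add: weyl_one_def weyl0.one[unfolded weyl_one_def])

lemma phi_centerG: "s \<in> centerG C \<Longrightarrow> phi C s x = of_nat (card (orbit C x)) * s x"
proof -
  assume s: "s \<in> centerG C"
  have "\<And>y. y \<in> orbit C x \<Longrightarrow> s y = s x"
    using centerG_weyl_invariant[OF s] unfolding orbit_def by blast
  then show ?thesis unfolding phi_def by simp
qed

(* s \<mapsto> phi_{1,s} is injective on Z(G): evaluate at S_x for the fundamental weights
   x, which lie in X^+, and use that a character is determined on the basis. *)
lemma central_char_inj_on_centerG: "inj_on (central_char C) (centerG C)"
proof (rule inj_onI)
  fix s1 s2 assume s1: "s1 \<in> centerG C" and s2: "s2 \<in> centerG C"
    and eq: "central_char C s1 = central_char C s2"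
  show "s1 = s2"
  proof (rule torus_eq_on_basis[OF centerG_torus[OF s1] centerG_torus[OF s2]])
    fix i
    let ?x = "simple_coroot i :: 'i wt"
    have "central_char C s1 ?x = central_char C s2 ?x" using eq by simp
    then have "phi C s1 ?x = phi C s2 ?x" using fundamental_weight_Xplus unfolding central_char_def by simp
    then have "of_nat (card (orbit C ?x)) * s1 ?x = of_nat (card (orbit C ?x)) * s2 ?x"
      using phi_centerG[OF s1] phi_centerG[OF s2] by simp
    moreover have "card (orbit C ?x) \<noteq> 0"
      using orbit_finite orbit_self by (metis card_0_eq empty_iff)
    ultimately show "s1 ?x = s2 ?x" by simp
  qed
qed

end

definition supp :: "('a \<Rightarrow> complex) \<Rightarrow> 'a set" where "supp a = {g. a g \<noteq> 0}"

definition fchar :: "('i wt \<Rightarrow> complex) \<Rightarrow> ('i affw \<Rightarrow> complex) \<Rightarrow> complex" where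
  "fchar s a = (\<Sum>g\<in>supp a. a g * s (snd g))"

lemma fchar_on: "finite S \<Longrightarrow> supp a \<subseteq> S \<Longrightarrow> fchar s a = (\<Sum>g\<in>S. a g * s (snd g))"
  unfolding fchar_def by (rule sum.mono_neutral_left) (auto simp: supp_def)

lemma fchar_lin:
  assumes "finite (supp a)" "finite (supp b)"
  shows "fchar s (\<lambda>g. a g + c * b g) = fchar s a + c * fchar s b"
proof -
  let ?S = "supp a \<union> supp b"
  have f: "finite ?S" using assms by simp
  have "fchar s (\<lambda>g. a g + c * b g) = (\<Sum>g\<in>?S. (a g + c * b g) * s (snd g))"
    by (rule fchar_on[OF f]) (auto simp: supp_def)
  also have "\<dots> = (\<Sum>g\<in>?S. a g * s (snd g)) + c * (\<Sum>g\<in>?S. b g * s (snd g))"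
    by (simp add: sum.distrib sum_distrib_left algebra_simps)
  also have "\<dots> = fchar s a + c * fchar s b"
    using fchar_on[OF f, of a s] fchar_on[OF f, of b s] by auto
  finally show ?thesis .
qed

lemma fchar_add:
  assumes "finite (supp a)" "finite (supp b)"
  shows "fchar s (\<lambda>g. a g + b g) = fchar s a + fchar s b"
  using fchar_lin[OF assms, of s 1] by simp

lemma fchar_smult:
  assumes "finite (supp a)"
  shows "fchar s (\<lambda>g. c * a g) = c * fchar s a"
proof -
  have "fchar s (\<lambda>g. c * a g) = (\<Sum>g\<in>supp a. c * a g * s (snd g))"
    by (rule fchar_on[OF assms]) (auto simp: supp_def)
  then show ?thesis unfolding fchar_def by (simp add: sum_distrib_left algebra_simps)
qed

lemma supp_Tw: "supp (Tw w) = {w}"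
  unfolding supp_def Tw_def by auto

lemma fchar_Tw: "fchar s (Tw w) = s (snd w)"
  unfolding fchar_def supp_Tw by (simp add: Tw_def)

lemma supp_conv: "supp (conv a b) \<subseteq> (\<lambda>p. wmul (fst p) (snd p)) ` (supp a \<times> supp b)"
proof
  fix g assume g: "g \<in> supp (conv a b)"
  show "g \<in> (\<lambda>p. wmul (fst p) (snd p)) ` (supp a \<times> supp b)"
  proof (rule ccontr)
    assume ng: "g \<notin> (\<lambda>p. wmul (fst p) (snd p)) ` (supp a \<times> supp b)"
    have "{p \<in> {h. a h \<noteq> 0} \<times> {k. b k \<noteq> 0}. wmul (fst p) (snd p) = g} = {}"
    proof (rule equals0I)
      fix p assume "p \<in> {p \<in> {h. a h \<noteq> 0} \<times> {k. b k \<noteq> 0}. wmul (fst p) (snd p) = g}"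
      then have "p \<in> supp a \<times> supp b" "g = wmul (fst p) (snd p)" unfolding supp_def by auto
      then show False using ng by blast
    qed
    then have "conv a b g = 0" unfolding conv_def by (simp only: sum.empty)
    then show False using g unfolding supp_def by simp
  qed
qed

lemma finite_supp_conv: "finite (supp a) \<Longrightarrow> finite (supp b) \<Longrightarrow> finite (supp (conv a b))"
  by (rule finite_subset[OF supp_conv]) simp

lemma fchar_conv:
  fixes a b :: "'i affw \<Rightarrow> complex"
  assumes fa: "finite (supp a)" and fb: "finite (supp b)"
    and mul: "\<And>h k. h \<in> supp a \<Longrightarrow> k \<in> supp b \<Longrightarrow> s (snd (wmul h k)) = s (snd h) * s (snd k)"
  shows "fchar s (conv a b) = fchar s a * fchar s b"
proof -
  define S where "S = supp a \<times> supp b"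
  define m where "m = (\<lambda>p::'i affw \<times> 'i affw. wmul (fst p) (snd p))"
  have fS: "finite S" unfolding S_def using fa fb by simp
  have fG: "finite (m ` S)" using fS by simp
  have "fchar s (conv a b) = (\<Sum>g\<in>m ` S. conv a b g * s (snd g))"
    by (rule fchar_on[OF fG]) (use supp_conv in \<open>auto simp: S_def m_def\<close>)
  also have "\<dots> = (\<Sum>g\<in>m ` S. \<Sum>p\<in>{p \<in> S. m p = g}. a (fst p) * b (snd p) * s (snd (m p)))"
    unfolding conv_def S_def m_def supp_def
    by (rule sum.cong[OF refl]) (simp add: sum_distrib_right)
  also have "\<dots> = (\<Sum>p\<in>S. a (fst p) * b (snd p) * s (snd (m p)))"
    by (rule sum.image_gen[OF fS, symmetric])
  also have "\<dots> = (\<Sum>p\<in>S. (a (fst p) * s (snd (fst p))) * (b (snd p) * s (snd (snd p))))"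
    by (rule sum.cong[OF refl]) (auto simp: S_def m_def mul)
  also have "\<dots> = fchar s a * fchar s b"
    unfolding fchar_def sum_product S_def sum.cartesian_product by (simp add: case_prod_beta)
  finally show ?thesis .
qed

lemma H1_iff: "a \<in> H1 C \<longleftrightarrow> finite (supp a) \<and> supp a \<subseteq> Wset C"
  unfolding H1_def supp_def by simp

lemma wmul_fst: "fst (wmul h k) = wcomp (fst h) (fst k)"
  by (simp add: wmul_def wcomp_def)

lemma wmul_Wset: "h \<in> Wset C \<Longrightarrow> k \<in> Wset C \<Longrightarrow> wmul h k \<in> Wset C"
  using weyl0_comp[of "fst h" C "fst k"] by (simp add: Wset_def mem_Times_iff wmul_fst)

lemma H1_conv: "a \<in> H1 C \<Longrightarrow> b \<in> H1 C \<Longrightarrow> conv a b \<in> H1 C"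
proof -
  assume a: "a \<in> H1 C" and b: "b \<in> H1 C"
  have "finite (supp (conv a b))" using a b unfolding H1_iff by (intro finite_supp_conv) auto
  moreover have "supp (conv a b) \<subseteq> Wset C"
  proof
    fix g assume "g \<in> supp (conv a b)"
    then obtain p where "p \<in> supp a \<times> supp b" "g = wmul (fst p) (snd p)" using supp_conv by blast
    then have "fst p \<in> supp a" "snd p \<in> supp b" "g = wmul (fst p) (snd p)" by auto
    moreover have "supp a \<subseteq> Wset C" "supp b \<subseteq> Wset C" using a b unfolding H1_iff by auto
    ultimately show "g \<in> Wset C" using wmul_Wset[of "fst p" C "snd p"] by blast
  qed
  ultimately show ?thesis unfolding H1_iff by simp
qed

lemma H1_add: "a \<in> H1 C \<Longrightarrow> b \<in> H1 C \<Longrightarrow> (\<lambda>g. a g + b g) \<in> H1 C"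
proof -
  assume a: "a \<in> H1 C" and b: "b \<in> H1 C"
  have "supp (\<lambda>g. a g + b g) \<subseteq> supp a \<union> supp b" unfolding supp_def by auto
  then show ?thesis using a b unfolding H1_iff by (auto intro: finite_subset)
qed

lemma H1_smult: "a \<in> H1 C \<Longrightarrow> (\<lambda>g. c * a g) \<in> H1 C"
proof -
  assume a: "a \<in> H1 C"
  have "supp (\<lambda>g. c * a g) \<subseteq> supp a" unfolding supp_def by auto
  then show ?thesis using a unfolding H1_iff by (auto intro: finite_subset)
qed

lemma wone_Wset: "wone \<in> Wset C"
  unfolding wone_def Wset_def using weyl0.one by auto

lemma Tw_H1: "g \<in> Wset C \<Longrightarrow> Tw g \<in> H1 C"
  unfolding H1_iff supp_Tw by simp

lemma Sx_supp: "supp (Sx C x) \<subseteq> (\<lambda>y. (weyl_one, y)) ` orbit C x"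
proof
  fix g assume g: "g \<in> supp (Sx C x)"
  show "g \<in> (\<lambda>y. (weyl_one, y)) ` orbit C x"
  proof (rule ccontr)
    assume ng: "g \<notin> (\<lambda>y. (weyl_one, y)) ` orbit C x"
    have "Sx C x g = (\<Sum>y\<in>orbit C x. 0)"
      unfolding Sx_def theta1_def Tw_def by (rule sum.cong[OF refl]) (use ng in auto)
    then show False using g unfolding supp_def by simp
  qed
qed

lemma Tw_conv: "conv (Tw g) (Tw k) = Tw (wmul g k)"
proof
  fix x
  have "{p \<in> {h. Tw g h \<noteq> 0} \<times> {h. Tw k h \<noteq> 0}. wmul (fst p) (snd p) = x}
        = (if wmul g k = x then {(g, k)} else {})"
    by (auto simp: Tw_def)
  then show "conv (Tw g) (Tw k) x = Tw (wmul g k) x"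
    unfolding conv_def by (simp add: Tw_def)
qed

lemma wmul_one_one: "wmul (weyl_one, x) (weyl_one, y) = (weyl_one, add_wt x y)"
  by (simp add: wmul_def weyl_one_def inv_id)

lemma wmul_v_one: "wmul (v, zero_wt) (weyl_one, x) = (v, x)"
  by (simp add: wmul_def weyl_one_def inv_id add_wt_zero)

lemma wmul_one_v: "wmul (weyl_one, y) (v, zero_wt) = (v, inv (fst v) y)"
  by (simp add: wmul_def weyl_one_def add_wt_zero)

lemma in_Wset: "v \<in> weyl0 C \<Longrightarrow> (v, x) \<in> Wset C"
  unfolding Wset_def by simp

(* Every s in Z(G) yields a one-dimensional representation of H_{1,s}. *)

context cartan begin

lemma Sx_H1: "Sx C x \<in> H1 C"
proof -
  have "(\<lambda>y. (weyl_one, y)) ` orbit C x \<subseteq> Wset C" unfolding Wset_def using weyl0.one by auto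
  moreover have "finite ((\<lambda>y. (weyl_one::'i weyl, y)) ` orbit C x)" using orbit_finite by simp
  ultimately show ?thesis unfolding H1_iff using Sx_supp[of C x] by (auto intro: finite_subset)
qed

lemma fchar_Sx: "fchar s (Sx C x) = (\<Sum>y\<in>orbit C x. s y)"
proof -
  define S where "S = (\<lambda>y. (weyl_one::'i weyl, y)) ` orbit C x"
  have fS: "finite S" unfolding S_def using orbit_finite by simp
  have "fchar s (Sx C x) = (\<Sum>g\<in>S. Sx C x g * s (snd g))"
    by (rule fchar_on[OF fS]) (use Sx_supp in \<open>simp add: S_def\<close>)
  also have "\<dots> = (\<Sum>g\<in>S. \<Sum>y\<in>orbit C x. (if g = (weyl_one, y) then s (snd g) else 0))"
    unfolding Sx_def theta1_def Tw_def sum_distrib_right by (intro sum.cong refl) auto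
  also have "\<dots> = (\<Sum>y\<in>orbit C x. \<Sum>g\<in>S. (if g = (weyl_one, y) then s (snd g) else 0))"
    by (rule sum.swap)
  also have "\<dots> = (\<Sum>y\<in>orbit C x. s y)"
    using fS by (intro sum.cong[OF refl]) (simp add: sum.delta' S_def)
  finally show ?thesis .
qed

(* For s in Z(G), s(x_{gk}) = s(x_g) s(x_k), since x_{gk} = w_k^{-1} x_g + x_k. *)
lemma centerG_inv_weyl_invariant: "s \<in> centerG C \<Longrightarrow> w \<in> weyl0 C \<Longrightarrow> s (inv (fst w) x) = s x"
proof -
  assume s: "s \<in> centerG C" and w: "w \<in> weyl0 C"
  obtain w' where w': "w' \<in> weyl0 C" "wcomp w w' = weyl_one" using weyl0_has_inverse[OF w] by blast
  have "fst w \<circ> fst w' = id" using w'(2) unfolding wcomp_def weyl_one_def by simp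
  then have "surj (fst w)" by (intro surjI[where f="fst w'"]) (simp add: fun_eq_iff)
  then have "fst w (inv (fst w) x) = x" by (rule surj_f_inv_f)
  then show ?thesis using centerG_weyl_invariant[OF s w, of "inv (fst w) x"] by simp
qed

lemma centerG_wmul:
  assumes s: "s \<in> centerG C" and h: "g1 \<in> Wset C" and k: "k \<in> Wset C"
  shows "s (snd (wmul g1 k)) = s (snd g1) * s (snd k)"
proof -
  have "fst k \<in> weyl0 C" using k unfolding Wset_def by auto
  then have "s (inv (fst (fst k)) (snd g1)) = s (snd g1)" by (rule centerG_inv_weyl_invariant[OF s])
  then show ?thesis unfolding wmul_def using torus_mult[OF centerG_torus[OF s]] by simp
qed

lemma fchar_conv_centerG:
  assumes s: "s \<in> centerG C" and a: "a \<in> H1 C" and b: "b \<in> H1 C"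
  shows "fchar s (conv a b) = fchar s a * fchar s b"
proof (rule fchar_conv)
  show "finite (supp a)" "finite (supp b)" using a b unfolding H1_iff by auto
  fix g1 k assume "g1 \<in> supp a" "k \<in> supp b"
  then show "s (snd (wmul g1 k)) = s (snd g1) * s (snd k)"
    using a b unfolding H1_iff by (intro centerG_wmul[OF s]) auto
qed

(* For s in Z(G), fchar s kills the ideal I_{1,s}: on the generators this is
   phi_{1,s}(S_x) = sum_{y in W_0 x} s(y). *)
lemma fchar_Iideal:
  assumes s: "s \<in> centerG C"
  shows "a \<in> Iideal C s \<Longrightarrow> a \<in> H1 C \<and> fchar s a = 0"
proof (induction rule: Iideal.induct)
  case (gen x)
  have e: "(\<lambda>g. Sx C x g - phi C s x * Tw wone g) = (\<lambda>g. Sx C x g + (- phi C s x) * Tw wone g)"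
    by simp
  have "(\<lambda>g. Sx C x g + (- phi C s x) * Tw wone g) \<in> H1 C"
    by (intro H1_add H1_smult Sx_H1 Tw_H1 wone_Wset)
  moreover have "fchar s (\<lambda>g. Sx C x g + (- phi C s x) * Tw wone g) = 0"
  proof -
    have fs: "finite (supp (Sx C x))" "finite (supp (Tw (wone::'i affw)))"
      using Sx_H1[of x] Tw_H1[OF wone_Wset[of C]] unfolding H1_iff by auto
    have "s zero_wt = 1" using centerG_torus[OF s] unfolding torus_def by simp
    then show ?thesis unfolding fchar_lin[OF fs] fchar_Sx fchar_Tw phi_def
      by (simp add: wone_def)
  qed
  ultimately show ?case unfolding e by simp
next
  case zero
  have "supp (\<lambda>g::'i affw. 0::complex) = {}" unfolding supp_def by simp
  then show ?case unfolding H1_iff fchar_def by simp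
next
  case (add a b)
  have h: "a \<in> H1 C" "b \<in> H1 C" using add.IH by auto
  then have "(\<lambda>g. a g + b g) \<in> H1 C" by (rule H1_add)
  moreover have "fchar s (\<lambda>g. a g + b g) = fchar s a + fchar s b"
    using h by (intro fchar_add) (auto simp: H1_iff)
  ultimately show ?case using add.IH by simp
next
  case (lmul a b)
  then show ?case using H1_conv[of a C b] fchar_conv_centerG[OF s] by simp
next
  case (rmul a b)
  then show ?case using H1_conv[of b C a] fchar_conv_centerG[OF s] by simp
qed

lemma centerG_one_dim_rep:
  assumes s: "s \<in> centerG C"
  shows "one_dim_rep C s (fchar s)"
  unfolding one_dim_rep_def
proof (intro conjI ballI allI)
  fix a b assume a: "a \<in> H1 C" and b: "b \<in> H1 C"
  show "fchar s (\<lambda>g. a g + b g) = fchar s a + fchar s b"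
    using a b by (intro fchar_add) (auto simp: H1_iff)
  show "fchar s (conv a b) = fchar s a * fchar s b" using fchar_conv_centerG[OF s a b] .
next
  fix c a assume "a \<in> H1 C"
  then show "fchar s (\<lambda>g. c * a g) = c * fchar s a" by (intro fchar_smult) (auto simp: H1_iff)
next
  show "fchar s (Tw wone) = 1" using centerG_torus[OF s] unfolding fchar_Tw torus_def wone_def by simp
next
  fix a assume "a \<in> Iideal C s"
  then show "fchar s a = 0" using fchar_Iideal[OF s] by blast
qed

end

(* Every one-dimensional representation of H_{1,s} has the central character of some
   element of Z(G), namely of its restriction to the translations t_x. *)

definition rep_char :: "(('i affw \<Rightarrow> complex) \<Rightarrow> complex) \<Rightarrow> 'i wt \<Rightarrow> complex" where
  "rep_char f = (\<lambda>x. f (Tw (weyl_one, x)))"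

lemma one_dim_repD:
  assumes "one_dim_rep C s f"
  shows "\<And>a b. a \<in> H1 C \<Longrightarrow> b \<in> H1 C \<Longrightarrow> f (\<lambda>g. a g + b g) = f a + f b"
    and "\<And>a b. a \<in> H1 C \<Longrightarrow> b \<in> H1 C \<Longrightarrow> f (conv a b) = f a * f b"
    and "\<And>c a. a \<in> H1 C \<Longrightarrow> f (\<lambda>g. c * a g) = c * f a"
    and "f (Tw wone) = 1"
    and "\<And>a. a \<in> Iideal C s \<Longrightarrow> f a = 0"
  using assms unfolding one_dim_rep_def by blast+

lemma one_dim_rep_Tw:
  assumes "one_dim_rep C s f" and "g \<in> Wset C" and "k \<in> Wset C"
  shows "f (Tw (wmul g k)) = f (Tw g) * f (Tw k)"
proof -
  have "f (conv (Tw g) (Tw k)) = f (Tw g) * f (Tw k)"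
    using one_dim_repD(2)[OF assms(1) Tw_H1[OF assms(2)] Tw_H1[OF assms(3)]] .
  then show ?thesis by (simp add: Tw_conv)
qed

lemma one_dim_rep_sum:
  assumes rep: "one_dim_rep C s f" and "finite F" and "\<forall>y\<in>F. u y \<in> H1 C"
  shows "(\<lambda>g. \<Sum>y\<in>F. u y g) \<in> H1 C \<and> f (\<lambda>g. \<Sum>y\<in>F. u y g) = (\<Sum>y\<in>F. f (u y))"
  using assms(2,3)
proof (induction F rule: finite_induct)
  case empty
  have z: "(\<lambda>g. 0) \<in> H1 C" unfolding H1_iff supp_def by simp
  have "f (\<lambda>g. 0 + 0) = f (\<lambda>g. 0) + f (\<lambda>g. 0)" using one_dim_repD(1)[OF rep z z] .
  then show ?case using z by simp
next
  case (insert y F)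
  have h: "u y \<in> H1 C" "(\<lambda>g. \<Sum>y\<in>F. u y g) \<in> H1 C" using insert by auto
  have "(\<lambda>g. \<Sum>y\<in>insert y F. u y g) = (\<lambda>g. u y g + (\<Sum>y\<in>F. u y g))"
    using insert.hyps by simp
  then show ?case using H1_add[OF h] one_dim_repD(1)[OF rep h] insert by simp
qed

lemma rep_char_torus:
  assumes "one_dim_rep C s f"
  shows "rep_char f \<in> torus"
proof -
  have "rep_char f zero_wt = 1" using one_dim_repD(4)[OF assms] unfolding rep_char_def wone_def .
  moreover have "rep_char f (add_wt x y) = rep_char f x * rep_char f y" for x y
    using one_dim_rep_Tw[OF assms in_Wset[OF weyl0.one] in_Wset[OF weyl0.one]]
    unfolding rep_char_def by (simp add: wmul_one_one)
  ultimately show ?thesis unfolding torus_def by blast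
qed

context cartan begin

lemma weyl0_inj: "v \<in> weyl0 C \<Longrightarrow> inj (fst v)"
proof -
  assume v: "v \<in> weyl0 C"
  obtain w' where w': "w' \<in> weyl0 C" "wcomp w' v = weyl_one" using weyl0_has_inverse[OF v] by blast
  then have "fst w' \<circ> fst v = id" unfolding wcomp_def weyl_one_def by simp
  then show ?thesis by (intro inj_on_inverseI[where g="fst w'"]) (simp add: fun_eq_iff)
qed

(* Since t_{w x} = w t_x w^{-1} in W, the restriction of f to translations is
   W_0-invariant. *)
lemma rep_char_weyl_invariant:
  assumes rep: "one_dim_rep C s f" and v: "v \<in> weyl0 C"
  shows "rep_char f (fst v x) = rep_char f x"
proof -
  note fT = one_dim_rep_Tw[OF rep]
  have oneW: "(weyl_one, y) \<in> Wset C" for y using in_Wset[OF weyl0.one] .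
  have "f (Tw (v, zero_wt)) \<noteq> 0"
  proof -
    obtain w' where w': "w' \<in> weyl0 C" "wcomp v w' = weyl_one" using weyl0_has_inverse[OF v] by blast
    have "fst w' zero_wt = zero_wt" using weyl0_additive[OF w'(1)] by simp
    then have iz: "inv (fst w') zero_wt = zero_wt" using weyl0_inj[OF w'(1)] by (metis inv_f_f)
    have "wmul (v, zero_wt) (w', zero_wt) = wone"
      using w'(2) iz by (simp add: wmul_def wcomp_def add_wt_zero wone_def)
    then have "f (Tw (v, zero_wt)) * f (Tw (w', zero_wt)) = 1"
      using fT[OF in_Wset[OF v, of zero_wt] in_Wset[OF w'(1), of zero_wt]] one_dim_repD(4)[OF rep]
      by simp
    then show ?thesis by auto
  qed
  moreover have "f (Tw (v, zero_wt)) * rep_char f x = f (Tw (v, x))"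
    unfolding rep_char_def using fT[OF in_Wset[OF v, of zero_wt] oneW[of x]] by (simp add: wmul_v_one)
  moreover have "rep_char f (fst v x) * f (Tw (v, zero_wt)) = f (Tw (v, x))"
    unfolding rep_char_def using fT[OF oneW[of "fst v x"] in_Wset[OF v, of zero_wt]] weyl0_inj[OF v]
    by (simp add: wmul_one_v inv_f_f)
  ultimately show ?thesis by (metis mult.commute mult_cancel_left)
qed

(* A W_0-invariant character of X is trivial on the roots, i.e. lies in Z(G):
   s(x) = s(s_j x) = s(x) s(alpha_j)^{-<x, alpha_j^vee>} at x = the j-th fundamental weight. *)
lemma weyl_invariant_centerG:
  assumes st: "s \<in> torus" and inv: "\<And>v x. v \<in> weyl0 C \<Longrightarrow> s (fst v x) = s x"
  shows "s \<in> centerG C"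
proof -
  have sa: "s (simple_root C j) = 1" for j
  proof -
    let ?e = "simple_coroot j :: 'i wt" and ?a = "simple_root C j"
    have "s (sref C j ?e) = s ?e" using inv[OF simple_refl_weyl0[of C j]] by simp
    moreover have "sref C j ?e = add_wt ?e (\<lambda>i. - ?a i)"
      unfolding sref_def add_wt_def simple_root_def by (rule ext) (simp add: simple_coroot_def)
    ultimately have "s ?e * s (\<lambda>i. - ?a i) = s ?e" using torus_mult[OF st] by simp
    then have m: "s (\<lambda>i. - ?a i) = 1" using torus_nonzero[OF st, of ?e] by simp
    have "add_wt ?a (\<lambda>i. - ?a i) = zero_wt" by (simp add: add_wt_def zero_wt_def)
    then have "s ?a * s (\<lambda>i. - ?a i) = s zero_wt" using torus_mult[OF st] by metis
    also have "\<dots> = 1" using st unfolding torus_def by simp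
    finally show ?thesis using m by simp
  qed
  have "s a = 1" if a: "a \<in> roots C" for a
  proof -
    obtain w j where "w \<in> weyl0 C" "a = fst w (simple_root C j)"
      using a unfolding roots_def by blast
    then show ?thesis using inv sa by simp
  qed
  then show ?thesis unfolding centerG_def using st by blast
qed

(* Evaluating f on S_x - phi_{1,s}(S_x) shows phi_{1,s} = phi_{1,s'} on X^+. *)
lemma rep_char_phi:
  assumes rep: "one_dim_rep C s f" and x: "x \<in> Xplus C"
  shows "phi C s x = phi C (rep_char f) x"
proof -
  have f1: "f (Tw wone) = 1" and fI: "f (\<lambda>g. Sx C x g - phi C s x * Tw wone g) = 0"
    using one_dim_repD(4,5)[OF rep] Iideal.gen[OF x] by auto
  have oneW: "(weyl_one, y) \<in> Wset C" for y using in_Wset[OF weyl0.one] .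
  have fS: "f (Sx C x) = phi C (rep_char f) x"
    using one_dim_rep_sum[OF rep orbit_finite, of x "\<lambda>y. Tw (weyl_one, y)"] Tw_H1[OF oneW]
    unfolding Sx_def theta1_def phi_def rep_char_def by simp
  have "f (\<lambda>g. Sx C x g + (- phi C s x) * Tw wone g) = f (Sx C x) + (- phi C s x) * f (Tw wone)"
    by (rule trans[OF one_dim_repD(1)[OF rep Sx_H1 H1_smult[OF Tw_H1[OF wone_Wset]]]])
      (simp only: one_dim_repD(3)[OF rep Tw_H1[OF wone_Wset]])
  then show ?thesis using fI fS f1 by simp
qed

lemma one_dim_rep_centerG:
  assumes rep: "one_dim_rep C s f"
  shows "rep_char f \<in> centerG C" and "central_char C s = central_char C (rep_char f)"
proof -
  show "rep_char f \<in> centerG C"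
    using weyl_invariant_centerG[OF rep_char_torus[OF rep] rep_char_weyl_invariant[OF rep]] .
  show "central_char C s = central_char C (rep_char f)"
    unfolding central_char_def using rep_char_phi[OF rep] by (intro ext) simp
qed

lemma central_chars_with_rep:
  "{central_char C s | s. s \<in> torus \<and> (\<exists>f. one_dim_rep C s f)} = central_char C ` centerG C"
proof
  show "{central_char C s | s. s \<in> torus \<and> (\<exists>f. one_dim_rep C s f)} \<subseteq> central_char C ` centerG C"
  proof
    fix u assume "u \<in> {central_char C s | s. s \<in> torus \<and> (\<exists>f. one_dim_rep C s f)}"
    then obtain s f where "u = central_char C s" "one_dim_rep C s f" by blast
    then show "u \<in> central_char C ` centerG C"
      using one_dim_rep_centerG[of s f] by (intro image_eqI[of _ _ "rep_char f"]) simp_all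
  qed
  show "central_char C ` centerG C \<subseteq> {central_char C s | s. s \<in> torus \<and> (\<exists>f. one_dim_rep C s f)}"
  proof
    fix u assume "u \<in> central_char C ` centerG C"
    then obtain s where "s \<in> centerG C" "u = central_char C s" by blast
    then show "u \<in> {central_char C s | s. s \<in> torus \<and> (\<exists>f. one_dim_rep C s f)}"
      using centerG_torus centerG_one_dim_rep by blast
  qed
qed

end

(* The data of irred_cartan provide a symmetrized positive definite Cartan matrix. *)
lemma irred_cartan_cartan:
  assumes "irred_cartan C"
  obtains d where "cartan C d"
proof -
  obtain d where "\<forall>i. C i i = 2" "\<forall>i j. i \<noteq> j \<longrightarrow> C i j \<le> 0" "\<forall>i. 0 < d i"
    "\<forall>i j. d i * of_int (C i j) = d j * of_int (C j i)"
    "\<forall>v::'a \<Rightarrow> real. v \<noteq> (\<lambda>i. 0) \<longrightarrow> 0 < (\<Sum>i\<in>UNIV. \<Sum>j\<in>UNIV. v i * d i * of_int (C i j) * v j)"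
    using assms unfolding irred_cartan_def by (elim conjE exE) (intro that, assumption+)
  then have "cartan C d" unfolding cartan_def by blast
  then show thesis by (rule that)
qed

theorem corollary2p2:
  fixes C :: "'i::finite \<Rightarrow> 'i \<Rightarrow> int"
  assumes "irred_cartan C"
  shows "card {central_char C s | s. s \<in> torus \<and> (\<exists>f. one_dim_rep C s f)}
         = card (centerG C)"
proof -
  obtain d where "cartan C d" using irred_cartan_cartan[OF assms] .
  then interpret cartan C d .
  show ?thesis
    unfolding central_chars_with_rep using card_image[OF central_char_inj_on_centerG] .
qed

end
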